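(* Let $M$ be a pointed metric space which is not uniformly discrete and let $X$ be a non-zero Banach space. Then the norm of $\mathcal F(M)\widehat{\otimes}_\pi X$ is octahedral.
   Context: All Banach spaces are real. $\mathcal F(M)$ is the Lipschitz-free space over $M$ (closed linear span of evaluation functionals $\delta_p$ in the dual of the space $\mathrm{Lip}_0(M)$ of real Lipschitz functions vanishing at the base point), $\widehat{\otimes}_\pi$ is the projective tensor product. $M$ is uniformly discrete if $\inf\{d(x,y):x\neq y\}>0$. A Banach space $Z$ is octahedral if for every $x_1,\dots,x_n\in S_Z$ and $\varepsilon>0$ there is $y\in S_Z$ with $\|x_i-y\|\ge 2-\varepsilon$ for all $i$. *)

theory Defs
  imports "HOL-Analysis.Analysis" "HOL-Library.Function_Algebras"
begin

instantiation "fun" :: (type, real_vector) real_vector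
begin
definition scaleR_fun :: "real \<Rightarrow> ('a \<Rightarrow> 'b) \<Rightarrow> 'a \<Rightarrow> 'b" where
  "scaleR_fun c f = (\<lambda>x. c *\<^sub>R f x)"
instance
  by standard (auto simp: scaleR_fun_def fun_eq_iff scaleR_add_right scaleR_add_left)
end

definition uniformly_discrete :: "'m::metric_space set \<Rightarrow> bool" where
  "uniformly_discrete M \<longleftrightarrow>
     (\<exists>\<delta>>0. \<forall>x\<in>M. \<forall>y\<in>M. x \<noteq> y \<longrightarrow> dist x y \<ge> \<delta>)"

text \<open>A normed space is given by a linear subspace S of a real vector space (of functions)
  together with a norm N on it.\<close>

definition lin_on :: "'a::real_vector set \<Rightarrow> ('a \<Rightarrow> real) \<Rightarrow> bool" where
  "lin_on S \<phi> \<longleftrightarrow> (\<forall>f\<in>S. \<forall>g\<in>S. \<forall>c::real. \<phi> (c *\<^sub>R f + g) = c * \<phi> f + \<phi> g)"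

definition dual_space :: "'a::real_vector set \<Rightarrow> ('a \<Rightarrow> real) \<Rightarrow> ('a \<Rightarrow> real) set" where
  "dual_space S N = {\<phi>. lin_on S \<phi> \<and> (\<forall>f. f \<notin> S \<longrightarrow> \<phi> f = 0) \<and>
      (\<exists>C. \<forall>f\<in>S. N f \<le> 1 \<longrightarrow> \<bar>\<phi> f\<bar> \<le> C)}"

definition dual_norm :: "'a::real_vector set \<Rightarrow> ('a \<Rightarrow> real) \<Rightarrow> ('a \<Rightarrow> real) \<Rightarrow> real" where
  "dual_norm S N \<phi> = Sup {\<bar>\<phi> f\<bar> | f. f \<in> S \<and> N f \<le> 1}"

definition restr :: "'a set \<Rightarrow> ('a \<Rightarrow> real) \<Rightarrow> 'a \<Rightarrow> real" where
  "restr S \<phi> = (\<lambda>f. if f \<in> S then \<phi> f else 0)"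

definition closed_span_dual ::
  "'a::real_vector set \<Rightarrow> ('a \<Rightarrow> real) \<Rightarrow> ('a \<Rightarrow> real) set \<Rightarrow> ('a \<Rightarrow> real) set" where
  "closed_span_dual S N G =
     {\<phi> \<in> dual_space S N. \<forall>e>0. \<exists>\<psi>\<in>span G. dual_norm S N (\<phi> - \<psi>) < e}"

definition lip0 :: "'m::metric_space \<Rightarrow> ('m \<Rightarrow> real) set" where
  "lip0 p0 = {f. f p0 = 0 \<and> (\<exists>L. L-lipschitz_on UNIV f)}"

definition lipnorm :: "('m::metric_space \<Rightarrow> real) \<Rightarrow> real" where
  "lipnorm f = Inf {L. L-lipschitz_on UNIV f}"

definition free_space :: "'m::metric_space \<Rightarrow> (('m \<Rightarrow> real) \<Rightarrow> real) set" where
  "free_space p0 = closed_span_dual (lip0 p0) lipnorm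
      (range (\<lambda>p. restr (lip0 p0) (\<lambda>f. f p)))"

definition free_norm :: "'m::metric_space \<Rightarrow> (('m \<Rightarrow> real) \<Rightarrow> real) \<Rightarrow> real" where
  "free_norm p0 = dual_norm (lip0 p0) lipnorm"

definition bil :: "'v::real_vector set \<Rightarrow> ('v \<Rightarrow> real) \<Rightarrow> ('v \<Rightarrow> 'x::real_normed_vector \<Rightarrow> real) set" where
  "bil V NV = {B. (\<forall>x. lin_on V (\<lambda>v. B v x)) \<and> (\<forall>v\<in>V. linear (B v)) \<and>
      (\<forall>v. v \<notin> V \<longrightarrow> B v = (\<lambda>x. 0)) \<and>
      (\<exists>C. \<forall>v\<in>V. \<forall>x. \<bar>B v x\<bar> \<le> C * NV v * norm x)}"

definition bilnorm :: "'v::real_vector set \<Rightarrow> ('v \<Rightarrow> real) \<Rightarrow> ('v \<Rightarrow> 'x::real_normed_vector \<Rightarrow> real) \<Rightarrow> real" where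
  "bilnorm V NV B = Sup {\<bar>B v x\<bar> | v x. v \<in> V \<and> NV v \<le> 1 \<and> norm x \<le> 1}"

text \<open>The projective tensor product, realized (isometrically, by the duality
  (V \<otimes>_\<pi> X)^* = B(V \<times> X)) as the closed linear span of the elementary tensors
  v \<otimes> x = (B \<mapsto> B v x) in the dual of the space of bounded bilinear forms.\<close>
definition ptensor :: "'v::real_vector set \<Rightarrow> ('v \<Rightarrow> real) \<Rightarrow> (('v \<Rightarrow> 'x::real_normed_vector \<Rightarrow> real) \<Rightarrow> real) set" where
  "ptensor V NV = closed_span_dual (bil V NV) (bilnorm V NV)
      {restr (bil V NV) (\<lambda>B. B v x) | v x. v \<in> V}"

definition ptnorm :: "'v::real_vector set \<Rightarrow> ('v \<Rightarrow> real) \<Rightarrow> (('v \<Rightarrow> 'x::real_normed_vector \<Rightarrow> real) \<Rightarrow> real) \<Rightarrow> real" where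
  "ptnorm V NV = dual_norm (bil V NV) (bilnorm V NV)"

definition octahedral :: "'z set \<Rightarrow> ('z::minus \<Rightarrow> real) \<Rightarrow> bool" where
  "octahedral Z N \<longleftrightarrow>
     (\<forall>A. finite A \<and> A \<subseteq> {z \<in> Z. N z = 1} \<longrightarrow>
        (\<forall>\<epsilon>>0. \<exists>y\<in>Z. N y = 1 \<and> (\<forall>x\<in>A. N (x - y) \<ge> 2 - \<epsilon>)))"

end

(*
  Let z_1, ..., z_n be unit vectors of F(M) (x)_pi X and eps > 0. Bounded bilinear forms on
  F(M) x X are the same as Lipschitz maps T : M -> X^* vanishing at the base point, via
  B(delta_p, x) = T p x. Each z_i nearly attains its norm at some T_i of Lipschitz constant 1,
  and up to eps it only sees the values of such maps on a finite set S of points.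
  As M is not uniformly discrete, there are points u /= v whose distance rho is tiny compared
  with the distances from v to the rest of S. Take y = (delta_u - delta_v) (x) x0 / (rho |x0|),
  a unit vector, and a functional x^* norming x0. Each T_i can be modified near u and v (a
  logarithmic cut-off around v and a tent of height rho around u) so that it is unchanged on S,
  T_i'(u) - T_i'(v) = - rho x^*, and its Lipschitz constant is at most 1 + 1/ln m + 2/m for a
  large ratio m. Testing z_i - y against T_i' gives |z_i - y| >= (2 - O(eps)) / (1 + O(eps)).
*)
theory Submission
  imports Defs
begin

section \<open>Seminormed subspaces and their duals\<close>

lemma scaleR_fun_apply [simp]: "(c *\<^sub>R F) x = c *\<^sub>R F x"
  by (simp add: scaleR_fun_def)

lemma le_mult_if_le_mult_greater:
  fixes y D A :: real
  assumes le: "\<And>a. A < a \<Longrightarrow> y \<le> D * a" and D: "0 \<le> D"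
  shows "y \<le> D * A"
proof (cases "D = 0")
  case True
  then show ?thesis using le[of "A + 1"] by simp
next
  case False
  then have D_pos: "0 < D" using D by simp
  have "y / D \<le> A"
  proof (rule dense_ge)
    fix a assume "A < a"
    then show "y / D \<le> a" using le[of a] D_pos by (simp add: divide_le_eq mult.commute)
  qed
  then show ?thesis using D_pos by (simp add: divide_le_eq mult.commute)
qed

lemma homogeneous_if_scale_le:
  fixes N :: "'a::real_vector \<Rightarrow> real"
  assumes closed: "\<And>c f. f \<in> S \<Longrightarrow> c *\<^sub>R f \<in> S"
    and nonneg: "\<And>f. f \<in> S \<Longrightarrow> 0 \<le> N f"
    and scale_le: "\<And>c f. f \<in> S \<Longrightarrow> N (c *\<^sub>R f) \<le> \<bar>c\<bar> * N f"
    and f: "f \<in> S"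
  shows "N (c *\<^sub>R f) = \<bar>c\<bar> * N f"
proof (cases "c = 0")
  case True
  then show ?thesis using scale_le[OF f, of 0] nonneg[OF closed[OF f, of 0]] by simp
next
  case False
  have "N f = N ((1/c) *\<^sub>R (c *\<^sub>R f))" using False by simp
  also have "\<dots> \<le> \<bar>1/c\<bar> * N (c *\<^sub>R f)" using scale_le[OF closed[OF f]] .
  finally have "\<bar>c\<bar> * N f \<le> N (c *\<^sub>R f)" using False by (simp add: field_simps)
  then show ?thesis using scale_le[OF f, of c] by simp
qed

lemma lin_on_zero:
  assumes "lin_on S \<phi>" "0 \<in> S"
  shows "\<phi> 0 = 0"
proof -
  have "\<phi> ((-1) *\<^sub>R 0 + 0) = (-1) * \<phi> 0 + \<phi> 0"
    using assms unfolding lin_on_def by blast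
  then show ?thesis by simp
qed

lemma lin_on_scale: "lin_on S \<phi> \<Longrightarrow> 0 \<in> S \<Longrightarrow> f \<in> S \<Longrightarrow> \<phi> (c *\<^sub>R f) = c * \<phi> f"
  using lin_on_zero[of S \<phi>] unfolding lin_on_def by (metis add.right_neutral)

lemma lin_on_add: "lin_on S \<phi> \<Longrightarrow> f \<in> S \<Longrightarrow> g \<in> S \<Longrightarrow> \<phi> (f + g) = \<phi> f + \<phi> g"
  unfolding lin_on_def by (metis mult_1 scaleR_one)

lemma lin_on_diff:
  assumes "lin_on S \<phi>" "f \<in> S" "g \<in> S"
  shows "\<phi> (f - g) = \<phi> f - \<phi> g"
proof -
  have "\<phi> ((-1) *\<^sub>R g + f) = (-1) * \<phi> g + \<phi> f"
    using assms unfolding lin_on_def by blast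
  then show ?thesis by simp
qed

lemma dual_space_lin_comb:
  assumes "\<phi> \<in> dual_space S N" "\<psi> \<in> dual_space S N"
  shows "c *\<^sub>R \<phi> + \<psi> \<in> dual_space S N"
proof -
  obtain C1 where C1: "\<forall>f\<in>S. N f \<le> 1 \<longrightarrow> \<bar>\<phi> f\<bar> \<le> C1"
    using assms(1) unfolding dual_space_def by blast
  obtain C2 where C2: "\<forall>f\<in>S. N f \<le> 1 \<longrightarrow> \<bar>\<psi> f\<bar> \<le> C2"
    using assms(2) unfolding dual_space_def by blast
  have "\<bar>c * \<phi> f + \<psi> f\<bar> \<le> \<bar>c\<bar> * C1 + C2" if "f \<in> S" "N f \<le> 1" for f
  proof -
    have "\<bar>c * \<phi> f + \<psi> f\<bar> \<le> \<bar>c\<bar> * \<bar>\<phi> f\<bar> + \<bar>\<psi> f\<bar>"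
      by (metis abs_mult abs_triangle_ineq)
    also have "\<dots> \<le> \<bar>c\<bar> * C1 + C2"
      using C1 C2 that by (intro add_mono mult_left_mono) auto
    finally show ?thesis .
  qed
  then show ?thesis
    using assms unfolding dual_space_def lin_on_def by (auto simp: algebra_simps)
qed

lemma subspace_dual_space: "subspace (dual_space S N)"
proof -
  have "0 \<in> dual_space S N"
    unfolding dual_space_def lin_on_def by auto
  then show ?thesis
    unfolding subspace_def using dual_space_lin_comb[of _ S N _ 1] dual_space_lin_comb[of _ S N 0]
    by auto
qed

lemma dual_norm_upper:
  assumes "\<phi> \<in> dual_space S N" "f \<in> S" "N f \<le> 1"
  shows "\<bar>\<phi> f\<bar> \<le> dual_norm S N \<phi>"
proof -
  obtain C where "\<forall>f\<in>S. N f \<le> 1 \<longrightarrow> \<bar>\<phi> f\<bar> \<le> C"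
    using assms(1) unfolding dual_space_def by blast
  then show ?thesis
    unfolding dual_norm_def using assms by (intro cSup_upper bdd_aboveI[of _ C]) auto
qed

locale seminormed_subspace =
  fixes S :: "'a::real_vector set" and N :: "'a \<Rightarrow> real"
  assumes subspace: "subspace S"
    and nonneg: "f \<in> S \<Longrightarrow> 0 \<le> N f"
    and homogeneous: "f \<in> S \<Longrightarrow> N (c *\<^sub>R f) = \<bar>c\<bar> * N f"
begin

lemma zero_in [simp]: "0 \<in> S"
  using subspace by (rule subspace_0)

lemma seminorm_zero [simp]: "N 0 = 0"
  using homogeneous[OF zero_in, of 0] by simp

lemma lin_comb_in: "f \<in> S \<Longrightarrow> g \<in> S \<Longrightarrow> c *\<^sub>R f + g \<in> S"
  using subspace by (simp add: subspace_add subspace_mul)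

lemma dual_norm_least:
  assumes "\<And>f. f \<in> S \<Longrightarrow> N f \<le> 1 \<Longrightarrow> \<bar>\<phi> f\<bar> \<le> D"
  shows "dual_norm S N \<phi> \<le> D"
  unfolding dual_norm_def using assms zero_in seminorm_zero by (intro cSup_least) fastforce+

lemma dual_norm_nonneg: "\<phi> \<in> dual_space S N \<Longrightarrow> 0 \<le> dual_norm S N \<phi>"
  using dual_norm_upper[of \<phi> S N 0] by simp

lemma dual_norm_bound:
  assumes \<phi>: "\<phi> \<in> dual_space S N" and f: "f \<in> S"
  shows "\<bar>\<phi> f\<bar> \<le> dual_norm S N \<phi> * N f"
proof (rule le_mult_if_le_mult_greater[OF _ dual_norm_nonneg[OF \<phi>]])
  fix a assume a: "N f < a"
  then have a_pos: "0 < a" using nonneg[OF f] by simp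
  have "N ((1/a) *\<^sub>R f) \<le> 1"
    using homogeneous[OF f] a a_pos by simp
  then have "\<bar>\<phi> ((1/a) *\<^sub>R f)\<bar> \<le> dual_norm S N \<phi>"
    using \<phi> f subspace by (intro dual_norm_upper) (auto simp: subspace_mul)
  moreover have "lin_on S \<phi>"
    using \<phi> unfolding dual_space_def by blast
  then have "\<phi> ((1/a) *\<^sub>R f) = \<phi> f / a"
    using lin_on_scale[OF _ zero_in f, of \<phi> "1/a"] by simp
  ultimately show "\<bar>\<phi> f\<bar> \<le> dual_norm S N \<phi> * a"
    using a_pos by (simp add: divide_le_eq mult.commute)
qed

lemma dual_norm_triangle:
  assumes "\<phi> \<in> dual_space S N" "\<psi> \<in> dual_space S N"
  shows "dual_norm S N (\<phi> + \<psi>) \<le> dual_norm S N \<phi> + dual_norm S N \<psi>"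
proof (rule dual_norm_least)
  fix f assume "f \<in> S" "N f \<le> 1"
  then show "\<bar>(\<phi> + \<psi>) f\<bar> \<le> dual_norm S N \<phi> + dual_norm S N \<psi>"
    using dual_norm_upper[OF assms(1)] dual_norm_upper[OF assms(2)] abs_triangle_ineq[of "\<phi> f" "\<psi> f"]
    by fastforce
qed

lemma dual_norm_scale_le:
  "\<phi> \<in> dual_space S N \<Longrightarrow> dual_norm S N (c *\<^sub>R \<phi>) \<le> \<bar>c\<bar> * dual_norm S N \<phi>"
  by (rule dual_norm_least) (auto simp: abs_mult intro: mult_left_mono dual_norm_upper)

lemma dual_norm_scale:
  "\<phi> \<in> dual_space S N \<Longrightarrow> dual_norm S N (c *\<^sub>R \<phi>) = \<bar>c\<bar> * dual_norm S N \<phi>"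
proof (rule homogeneous_if_scale_le[of "dual_space S N"])
  fix c and \<psi> assume "\<psi> \<in> dual_space S N"
  then show "dual_norm S N (c *\<^sub>R \<psi>) \<le> \<bar>c\<bar> * dual_norm S N \<psi>"
    by (rule dual_norm_scale_le)
qed (auto intro: subspace_mul[OF subspace_dual_space] dual_norm_nonneg)

lemma closed_span_dual_lin_comb:
  assumes G: "G \<subseteq> dual_space S N"
    and \<phi>: "\<phi> \<in> closed_span_dual S N G" and \<psi>: "\<psi> \<in> closed_span_dual S N G"
  shows "c *\<^sub>R \<phi> + \<psi> \<in> closed_span_dual S N G"
proof -
  have span_dual: "span G \<subseteq> dual_space S N"
    using G subspace_dual_space by (rule span_minimal)
  have \<phi>_dual: "\<phi> \<in> dual_space S N" and \<psi>_dual: "\<psi> \<in> dual_space S N"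
    using \<phi> \<psi> unfolding closed_span_dual_def by auto
  have "\<exists>\<xi>\<in>span G. dual_norm S N (c *\<^sub>R \<phi> + \<psi> - \<xi>) < e" if e: "e > 0" for e
  proof -
    define e' where "e' = e / (2 * (\<bar>c\<bar> + 1))"
    have e': "0 < e'" "\<bar>c\<bar> * e' \<le> e / 2"
      using e unfolding e'_def by (auto simp: field_simps)
    obtain \<xi>1 where \<xi>1: "\<xi>1 \<in> span G" "dual_norm S N (\<phi> - \<xi>1) < e'"
      using \<phi> e'(1) unfolding closed_span_dual_def by blast
    have "0 < e / 2" using e by simp
    then obtain \<xi>2 where \<xi>2: "\<xi>2 \<in> span G" "dual_norm S N (\<psi> - \<xi>2) < e / 2"
      using \<psi> unfolding closed_span_dual_def by blast
    have d1: "\<phi> - \<xi>1 \<in> dual_space S N" and d2: "\<psi> - \<xi>2 \<in> dual_space S N"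
      using \<phi>_dual \<psi>_dual \<xi>1(1) \<xi>2(1) span_dual subspace_dual_space by (auto intro: subspace_diff)
    have eq: "c *\<^sub>R \<phi> + \<psi> - (c *\<^sub>R \<xi>1 + \<xi>2) = c *\<^sub>R (\<phi> - \<xi>1) + (\<psi> - \<xi>2)"
      by (simp add: algebra_simps)
    have "dual_norm S N (c *\<^sub>R \<phi> + \<psi> - (c *\<^sub>R \<xi>1 + \<xi>2))
        \<le> dual_norm S N (c *\<^sub>R (\<phi> - \<xi>1)) + dual_norm S N (\<psi> - \<xi>2)"
      unfolding eq by (rule dual_norm_triangle[OF subspace_mul[OF subspace_dual_space d1] d2])
    also have "\<dots> = \<bar>c\<bar> * dual_norm S N (\<phi> - \<xi>1) + dual_norm S N (\<psi> - \<xi>2)"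
      using dual_norm_scale[OF d1] by simp
    also have "\<dots> < e"
      using \<xi>1(2) \<xi>2(2) e'(2) mult_left_mono[OF less_imp_le[OF \<xi>1(2)], of "\<bar>c\<bar>"] by simp
    finally show ?thesis
      using \<xi>1(1) \<xi>2(1) by (intro bexI[of _ "c *\<^sub>R \<xi>1 + \<xi>2"]) (auto intro: span_add span_scale)
  qed
  then show ?thesis
    unfolding closed_span_dual_def using dual_space_lin_comb[OF \<phi>_dual \<psi>_dual] by blast
qed

lemma span_subset_closed_span_dual:
  assumes G: "G \<subseteq> dual_space S N"
  shows "span G \<subseteq> closed_span_dual S N G"
proof
  fix \<psi> assume \<psi>: "\<psi> \<in> span G"
  have "\<psi> \<in> dual_space S N"
    using span_minimal[OF G subspace_dual_space] \<psi> by blast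
  moreover have "dual_norm S N (\<psi> - \<psi>) = 0"
    using dual_norm_scale[OF calculation, of 0] by simp
  ultimately show "\<psi> \<in> closed_span_dual S N G"
    unfolding closed_span_dual_def using \<psi> by force
qed

lemma seminormed_closed_span_dual:
  assumes G: "G \<subseteq> dual_space S N"
  shows "seminormed_subspace (closed_span_dual S N G) (dual_norm S N)"
proof
  have "0 \<in> closed_span_dual S N G"
    using span_subset_closed_span_dual[OF G] span_zero by blast
  then show "subspace (closed_span_dual S N G)"
    unfolding subspace_def
    using closed_span_dual_lin_comb[OF G, of _ _ 1] closed_span_dual_lin_comb[OF G, of _ 0 _]
    by (metis add.right_neutral scaleR_one)
  fix f c assume "f \<in> closed_span_dual S N G"
  then have "f \<in> dual_space S N"
    unfolding closed_span_dual_def by blast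
  then show "0 \<le> dual_norm S N f" "dual_norm S N (c *\<^sub>R f) = \<bar>c\<bar> * dual_norm S N f"
    by (auto simp: dual_norm_nonneg dual_norm_scale)
qed

end

section \<open>Bounded bilinear forms and the projective tensor product\<close>

definition elementary_tensor ::
  "'v::real_vector set \<Rightarrow> ('v \<Rightarrow> real) \<Rightarrow> 'v \<Rightarrow> 'x::real_normed_vector \<Rightarrow> ('v \<Rightarrow> 'x \<Rightarrow> real) \<Rightarrow> real"
  where "elementary_tensor V NV v x = restr (bil V NV) (\<lambda>B. B v x)"

lemma ptensor_eq_closed_span_dual:
  "ptensor V NV = closed_span_dual (bil V NV) (bilnorm V NV) {elementary_tensor V NV v x | v x. v \<in> V}"
  unfolding ptensor_def elementary_tensor_def ..

lemma elementary_tensor_apply [simp]: "B \<in> bil V NV \<Longrightarrow> elementary_tensor V NV v x B = B v x"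
  unfolding elementary_tensor_def restr_def by simp

lemma bil_lin_on: "B \<in> bil V NV \<Longrightarrow> lin_on V (\<lambda>v. B v x)"
  unfolding bil_def by blast

lemma bil_linear: "B \<in> bil V NV \<Longrightarrow> v \<in> V \<Longrightarrow> linear (B v)"
  unfolding bil_def by blast

lemma bil_lin_comb:
  fixes B B' :: "'v::real_vector \<Rightarrow> 'x::real_normed_vector \<Rightarrow> real"
  assumes B: "B \<in> bil V NV" and B': "B' \<in> bil V NV"
  shows "c *\<^sub>R B + B' \<in> bil V NV"
proof -
  let ?B = "c *\<^sub>R B + B'"
  obtain C1 where C1: "\<forall>v\<in>V. \<forall>x. \<bar>B v x\<bar> \<le> C1 * NV v * norm x"
    using B unfolding bil_def by blast
  obtain C2 where C2: "\<forall>v\<in>V. \<forall>x. \<bar>B' v x\<bar> \<le> C2 * NV v * norm x"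
    using B' unfolding bil_def by blast
  have "\<bar>?B v x\<bar> \<le> (\<bar>c\<bar> * C1 + C2) * NV v * norm x" if "v \<in> V" for v x
  proof -
    have "\<bar>?B v x\<bar> \<le> \<bar>c\<bar> * \<bar>B v x\<bar> + \<bar>B' v x\<bar>"
      by (metis abs_mult abs_triangle_ineq plus_fun_apply real_scaleR_def scaleR_fun_apply)
    also have "\<dots> \<le> \<bar>c\<bar> * (C1 * NV v * norm x) + C2 * NV v * norm x"
      using C1 C2 that by (intro add_mono mult_left_mono) auto
    finally show ?thesis by (simp add: algebra_simps)
  qed
  moreover have "linear (?B v)" if "v \<in> V" for v
    using bil_linear[OF B that] bil_linear[OF B' that]
    by (intro linearI) (simp_all add: linear_add linear_scale algebra_simps)
  moreover have "lin_on V (\<lambda>v. ?B v x)" for x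
    using bil_lin_on[OF B, of x] bil_lin_on[OF B', of x] unfolding lin_on_def
    by (simp add: algebra_simps)
  moreover have "?B v = (\<lambda>x. 0)" if "v \<notin> V" for v
    using B B' that unfolding bil_def by auto
  ultimately show ?thesis
    unfolding bil_def by blast
qed

lemma subspace_bil: "subspace (bil V NV)"
proof -
  have "0 \<in> bil V NV"
    unfolding bil_def lin_on_def by (auto intro!: exI[of _ 0] linearI)
  then show ?thesis
    unfolding subspace_def using bil_lin_comb[of _ V NV _ 1] bil_lin_comb[of _ V NV 0 _]
    by (metis add.right_neutral scaleR_one)
qed

context seminormed_subspace
begin

lemma bil_upper:
  assumes B: "B \<in> bil S N" and v: "v \<in> S" "N v \<le> 1" and x: "norm x \<le> 1"
  shows "\<bar>B v x\<bar> \<le> bilnorm S N B"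
proof -
  obtain C where C: "\<forall>v\<in>S. \<forall>x. \<bar>B v x\<bar> \<le> C * N v * norm x"
    using B unfolding bil_def by blast
  have "\<bar>B w y\<bar> \<le> \<bar>C\<bar>" if "w \<in> S" "N w \<le> 1" "norm y \<le> 1" for w y
  proof -
    have "\<bar>B w y\<bar> \<le> C * (N w * norm y)"
      using C that by (simp add: mult.assoc)
    also have "\<dots> \<le> \<bar>C\<bar> * (N w * norm y)"
      using that nonneg[of w] by (intro mult_right_mono) auto
    also have "\<dots> \<le> \<bar>C\<bar>"
      using that nonneg[of w] by (simp add: mult_left_le mult_le_one)
    finally show ?thesis .
  qed
  then show ?thesis
    unfolding bilnorm_def using v x by (intro cSup_upper bdd_aboveI[of _ "\<bar>C\<bar>"]) auto
qed

lemma bilnorm_least: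
  assumes "\<And>v x. v \<in> S \<Longrightarrow> N v \<le> 1 \<Longrightarrow> norm x \<le> 1 \<Longrightarrow> \<bar>B v x\<bar> \<le> D"
  shows "bilnorm S N B \<le> D"
  unfolding bilnorm_def
proof (rule cSup_least)
  have "\<bar>B 0 0\<bar> \<in> {\<bar>B v x\<bar> |v x. v \<in> S \<and> N v \<le> 1 \<and> norm x \<le> 1}"
    using zero_in seminorm_zero by force
  then show "{\<bar>B v x\<bar> |v x. v \<in> S \<and> N v \<le> 1 \<and> norm x \<le> 1} \<noteq> {}"
    by blast
qed (use assms in blast)

lemma bilnorm_nonneg: "B \<in> bil S N \<Longrightarrow> 0 \<le> bilnorm S N B"
  using bil_upper[of B 0 0] by simp

lemma bilnorm_bound:
  assumes B: "B \<in> bil S N" and v: "v \<in> S"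
  shows "\<bar>B v x\<bar> \<le> bilnorm S N B * N v * norm x"
proof -
  have scaled: "\<bar>B v x\<bar> \<le> (bilnorm S N B * b) * a" if a: "N v < a" and b: "norm x < b" for a b
  proof -
    have pos: "0 < a" "0 < b" using a b nonneg[OF v] norm_ge_zero[of x] by linarith+
    have "\<bar>B ((1/a) *\<^sub>R v) ((1/b) *\<^sub>R x)\<bar> \<le> bilnorm S N B"
      using a b pos homogeneous[OF v] subspace v by (intro bil_upper[OF B]) (auto simp: subspace_mul)
    moreover have "B ((1/a) *\<^sub>R v) ((1/b) *\<^sub>R x) = B v x / (a * b)"
      using lin_on_scale[OF bil_lin_on[OF B] zero_in v] linear_scale[OF bil_linear[OF B v]] by simp
    ultimately show ?thesis using pos by (simp add: abs_divide divide_le_eq mult_ac)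
  qed
  have "\<bar>B v x\<bar> \<le> (bilnorm S N B * b) * N v" if b: "norm x < b" for b
  proof (rule le_mult_if_le_mult_greater[of "N v"])
    show "0 \<le> bilnorm S N B * b"
      using b norm_ge_zero[of x] bilnorm_nonneg[OF B] by (simp del: norm_ge_zero)
  qed (rule scaled[OF _ b])
  then have "\<bar>B v x\<bar> \<le> (bilnorm S N B * N v) * norm x"
    using bilnorm_nonneg[OF B] nonneg[OF v]
    by (intro le_mult_if_le_mult_greater[of "norm x"]) (auto simp: mult_ac)
  then show ?thesis by simp
qed

lemma bilnorm_scale: "B \<in> bil S N \<Longrightarrow> bilnorm S N (c *\<^sub>R B) = \<bar>c\<bar> * bilnorm S N B"
proof (rule homogeneous_if_scale_le[of "bil S N"])
  fix c and B' :: "'a \<Rightarrow> 'b \<Rightarrow> real" assume B': "B' \<in> bil S N"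
  show "bilnorm S N (c *\<^sub>R B') \<le> \<bar>c\<bar> * bilnorm S N B'"
    by (rule bilnorm_least) (simp add: abs_mult mult_left_mono bil_upper[OF B'])
qed (auto intro: subspace_mul[OF subspace_bil] bilnorm_nonneg)

lemma seminormed_bil: "seminormed_subspace (bil S N) (bilnorm S N)"
  by unfold_locales (auto simp: subspace_bil bilnorm_nonneg bilnorm_scale)

lemma elementary_tensor_in_dual:
  assumes v: "v \<in> S"
  shows "elementary_tensor S N v x \<in> dual_space (bil S N) (bilnorm S N)"
proof -
  have "\<bar>B v x\<bar> \<le> N v * norm x" if "B \<in> bil S N" "bilnorm S N B \<le> 1" for B
    using bilnorm_bound[OF that(1) v, of x] mult_right_mono[OF that(2), of "N v * norm x"]
      nonneg[OF v] by (simp add: mult.assoc)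
  then show ?thesis
    unfolding dual_space_def lin_on_def
    using subspace_bil[of S N] by (auto simp: elementary_tensor_def restr_def bil_lin_comb)
qed

lemma elementary_tensors_in_dual:
  "{elementary_tensor S N v x | v x. v \<in> S} \<subseteq> dual_space (bil S N) (bilnorm S N)"
  using elementary_tensor_in_dual by blast

lemma seminormed_ptensor: "seminormed_subspace (ptensor S N) (ptnorm S N)"
  unfolding ptensor_eq_closed_span_dual ptnorm_def
  by (rule seminormed_subspace.seminormed_closed_span_dual[OF seminormed_bil elementary_tensors_in_dual])

lemma elementary_tensor_in_ptensor: "v \<in> S \<Longrightarrow> elementary_tensor S N v x \<in> ptensor S N"
  unfolding ptensor_eq_closed_span_dual
  using seminormed_subspace.span_subset_closed_span_dual[OF seminormed_bil elementary_tensors_in_dual]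
  by (blast intro: span_base)

lemma ptensor_in_dual: "z \<in> ptensor S N \<Longrightarrow> z \<in> dual_space (bil S N) (bilnorm S N)"
  unfolding ptensor_eq_closed_span_dual closed_span_dual_def by blast

lemma ptnorm_bound: "z \<in> ptensor S N \<Longrightarrow> B \<in> bil S N \<Longrightarrow> \<bar>z B\<bar> \<le> ptnorm S N z * bilnorm S N B"
  unfolding ptnorm_def
  by (rule seminormed_subspace.dual_norm_bound[OF seminormed_bil ptensor_in_dual])

lemma ptnorm_upper:
  "z \<in> ptensor S N \<Longrightarrow> B \<in> bil S N \<Longrightarrow> bilnorm S N B \<le> 1 \<Longrightarrow> \<bar>z B\<bar> \<le> ptnorm S N z"
  unfolding ptnorm_def by (rule dual_norm_upper[OF ptensor_in_dual])

lemma ptnorm_least: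
  "(\<And>B. B \<in> bil S N \<Longrightarrow> bilnorm S N B \<le> 1 \<Longrightarrow> \<bar>z B\<bar> \<le> D) \<Longrightarrow> ptnorm S N z \<le> D"
  unfolding ptnorm_def by (rule seminormed_subspace.dual_norm_least[OF seminormed_bil])

end

section \<open>The Lipschitz-free space\<close>

lemma lip0_lin_comb:
  assumes "f \<in> lip0 p0" "g \<in> lip0 p0"
  shows "c *\<^sub>R f + g \<in> lip0 p0"
proof -
  obtain L1 L2 where "L1-lipschitz_on UNIV f" "L2-lipschitz_on UNIV g"
    using assms unfolding lip0_def by blast
  then have "(\<bar>c\<bar> * L1 + L2)-lipschitz_on UNIV (\<lambda>p. c * f p + g p)"
    by (intro lipschitz_on_add lipschitz_on_cmult_real)
  then show ?thesis
    using assms unfolding lip0_def by auto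
qed

lemma lipnorm_le: "L-lipschitz_on UNIV f \<Longrightarrow> lipnorm f \<le> L"
  unfolding lipnorm_def
  by (rule cInf_lower) (auto intro!: bdd_belowI[of _ 0] dest: lipschitz_on_nonneg)

lemma lipnorm_nonneg: "f \<in> lip0 p0 \<Longrightarrow> 0 \<le> lipnorm f"
  unfolding lipnorm_def lip0_def
  by (rule cInf_greatest) (auto dest: lipschitz_on_nonneg)

lemma lipnorm_bound:
  assumes f: "f \<in> lip0 p0"
  shows "\<bar>f x - f y\<bar> \<le> lipnorm f * dist x y"
proof (cases "x = y")
  case False
  then have d: "0 < dist x y" by simp
  have "\<bar>f x - f y\<bar> / dist x y \<le> lipnorm f"
    unfolding lipnorm_def
  proof (rule cInf_greatest)
    show "{L. L-lipschitz_on UNIV f} \<noteq> {}"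
      using f unfolding lip0_def by blast
  next
    fix L assume "L \<in> {L. L-lipschitz_on UNIV f}"
    then have "\<bar>f x - f y\<bar> \<le> L * dist x y"
      using lipschitz_onD[of L UNIV f x y] by (auto simp: dist_real_def)
    then show "\<bar>f x - f y\<bar> / dist x y \<le> L"
      using d by (simp add: divide_le_eq)
  qed
  then show ?thesis using d by (simp add: divide_le_eq)
qed simp

lemma seminormed_lip0: "seminormed_subspace (lip0 p0) lipnorm"
proof
  have "0 \<in> lip0 p0"
    unfolding lip0_def by (auto intro!: exI[of _ 0] lipschitz_onI)
  then show sub: "subspace (lip0 p0)"
    unfolding subspace_def using lip0_lin_comb[of _ p0 _ 1] lip0_lin_comb[of _ p0 0]
    by (metis add.right_neutral scaleR_one)
  fix f c assume f: "f \<in> lip0 p0"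
  show "0 \<le> lipnorm f" using f by (rule lipnorm_nonneg)
  have scale_le: "lipnorm (c *\<^sub>R g) \<le> \<bar>c\<bar> * lipnorm g" if g: "g \<in> lip0 p0" for c g
  proof (rule lipnorm_le)
    have "(lipnorm g)-lipschitz_on UNIV g"
      using lipnorm_bound[OF g] lipnorm_nonneg[OF g] by (intro lipschitz_onI) (auto simp: dist_real_def)
    then show "(\<bar>c\<bar> * lipnorm g)-lipschitz_on UNIV (c *\<^sub>R g)"
      using lipschitz_on_cmult_real by (simp add: scaleR_fun_def)
  qed
  show "lipnorm (c *\<^sub>R f) = \<bar>c\<bar> * lipnorm f"
    by (rule homogeneous_if_scale_le[OF subspace_mul[OF sub] lipnorm_nonneg scale_le f])
qed

definition delta :: "'m::metric_space \<Rightarrow> 'm \<Rightarrow> ('m \<Rightarrow> real) \<Rightarrow> real" where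
  "delta p0 p = restr (lip0 p0) (\<lambda>f. f p)"

lemma free_space_eq: "free_space p0 = closed_span_dual (lip0 p0) lipnorm (range (delta p0))"
  unfolding free_space_def delta_def ..

lemma delta_apply [simp]: "f \<in> lip0 p0 \<Longrightarrow> delta p0 p f = f p"
  unfolding delta_def restr_def by simp

lemma delta_base: "delta p0 p0 = 0"
  unfolding delta_def restr_def lip0_def by (auto simp: fun_eq_iff)

lemma delta_in_dual: "delta p0 p \<in> dual_space (lip0 p0) lipnorm"
proof -
  have "\<bar>f p\<bar> \<le> dist p p0" if f: "f \<in> lip0 p0" "lipnorm f \<le> 1" for f
  proof -
    have "\<bar>f p - f p0\<bar> \<le> lipnorm f * dist p p0" by (rule lipnorm_bound[OF f(1)])
    also have "\<dots> \<le> dist p p0" using f lipnorm_nonneg by (intro mult_left_le_one_le) auto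
    finally show ?thesis using f(1) by (simp add: lip0_def)
  qed
  then show ?thesis
    unfolding dual_space_def lin_on_def using lip0_lin_comb[of _ p0]
    by (auto simp: delta_def restr_def)
qed

lemma seminormed_free_space: "seminormed_subspace (free_space p0) (free_norm p0)"
  unfolding free_space_eq free_norm_def
  by (rule seminormed_subspace.seminormed_closed_span_dual[OF seminormed_lip0])
    (auto intro: delta_in_dual)

lemma delta_in_free_space: "delta p0 p \<in> free_space p0"
proof -
  have "range (delta p0) \<subseteq> dual_space (lip0 p0) lipnorm"
    using delta_in_dual by blast
  moreover have "delta p0 p \<in> span (range (delta p0))"
    by (rule span_base) simp
  ultimately show ?thesis
    unfolding free_space_eq
    using seminormed_subspace.span_subset_closed_span_dual[OF seminormed_lip0] by blast
qed

lemma delta_diff_in_free_space: "delta p0 u - delta p0 v \<in> free_space p0"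
proof -
  interpret F: seminormed_subspace "free_space p0" "free_norm p0"
    by (rule seminormed_free_space)
  show ?thesis
    using F.lin_comb_in[OF delta_in_free_space delta_in_free_space, of "-1"] by simp
qed

lemma free_space_in_dual: "v \<in> free_space p0 \<Longrightarrow> v \<in> dual_space (lip0 p0) lipnorm"
  unfolding free_space_eq closed_span_dual_def by blast

lemma free_space_apply_bound:
  "v \<in> free_space p0 \<Longrightarrow> f \<in> lip0 p0 \<Longrightarrow> \<bar>v f\<bar> \<le> free_norm p0 v * lipnorm f"
  unfolding free_norm_def
  by (rule seminormed_subspace.dual_norm_bound[OF seminormed_lip0 free_space_in_dual])

lemma free_norm_delta_diff_le: "free_norm p0 (delta p0 p - delta p0 q) \<le> dist p q"
  unfolding free_norm_def
proof (rule seminormed_subspace.dual_norm_least[OF seminormed_lip0])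
  fix f assume f: "f \<in> lip0 p0" "lipnorm f \<le> 1"
  have "\<bar>f p - f q\<bar> \<le> lipnorm f * dist p q" by (rule lipnorm_bound[OF f(1)])
  also have "\<dots> \<le> dist p q" using f lipnorm_nonneg by (intro mult_left_le_one_le) auto
  finally show "\<bar>(delta p0 p - delta p0 q) f\<bar> \<le> dist p q" using f(1) by simp
qed

section \<open>Bilinear forms as Lipschitz maps into the dual\<close>

abbreviation free_bil :: "'m::metric_space \<Rightarrow> ((('m \<Rightarrow> real) \<Rightarrow> real) \<Rightarrow> 'x::real_normed_vector \<Rightarrow> real) set"
  where "free_bil p0 \<equiv> bil (free_space p0) (free_norm p0)"

abbreviation free_bilnorm ::
  "'m::metric_space \<Rightarrow> ((('m \<Rightarrow> real) \<Rightarrow> real) \<Rightarrow> 'x::real_normed_vector \<Rightarrow> real) \<Rightarrow> real"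
  where "free_bilnorm p0 \<equiv> bilnorm (free_space p0) (free_norm p0)"

lemma bil_delta_diff:
  assumes "B \<in> free_bil p0"
  shows "B (delta p0 u - delta p0 v) x = B (delta p0 u) x - B (delta p0 v) x"
  using lin_on_diff[OF bil_lin_on[OF assms] delta_in_free_space delta_in_free_space] by simp

definition lipschitz_dual_map :: "'m::metric_space \<Rightarrow> real \<Rightarrow> ('m \<Rightarrow> 'x::real_normed_vector \<Rightarrow> real) \<Rightarrow> bool"
  where "lipschitz_dual_map p0 L T \<longleftrightarrow> (\<forall>p. linear (T p)) \<and> (\<forall>x. T p0 x = 0) \<and>
    (\<forall>p q x. \<bar>T p x - T q x\<bar> \<le> L * dist p q * norm x)"

text \<open>The bounded bilinear forms on \<open>\<F>(M) \<times> X\<close> are exactly the linearizations of the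
  Lipschitz maps \<open>M \<rightarrow> X\<^sup>*\<close> vanishing at the base point.\<close>

definition bil_of_map ::
  "'m::metric_space \<Rightarrow> ('m \<Rightarrow> 'x::real_normed_vector \<Rightarrow> real) \<Rightarrow> (('m \<Rightarrow> real) \<Rightarrow> real) \<Rightarrow> 'x \<Rightarrow> real"
  where "bil_of_map p0 T = (\<lambda>v x. if v \<in> free_space p0 then v (\<lambda>p. T p x) else 0)"

lemma lipschitz_dual_map_mono:
  assumes "lipschitz_dual_map p0 L T" "L \<le> L'"
  shows "lipschitz_dual_map p0 L' T"
  using assms unfolding lipschitz_dual_map_def
  by (meson mult_right_mono norm_ge_zero order_trans zero_le_dist)

lemma lipschitz_dual_map_component:
  assumes T: "lipschitz_dual_map p0 L T" and L: "0 \<le> L"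
  shows "(\<lambda>p. T p x) \<in> lip0 p0" "lipnorm (\<lambda>p. T p x) \<le> L * norm x"
proof -
  have "(L * norm x)-lipschitz_on UNIV (\<lambda>p. T p x)"
    using T L unfolding lipschitz_dual_map_def
    by (intro lipschitz_onI) (auto simp: dist_real_def mult_ac)
  then show "(\<lambda>p. T p x) \<in> lip0 p0" "lipnorm (\<lambda>p. T p x) \<le> L * norm x"
    using T unfolding lip0_def lipschitz_dual_map_def by (auto intro: lipnorm_le)
qed

lemma bil_of_map_delta [simp]:
  assumes "lipschitz_dual_map p0 L T" "0 \<le> L"
  shows "bil_of_map p0 T (delta p0 p) x = T p x"
  using delta_in_free_space[of p0 p] lipschitz_dual_map_component(1)[OF assms]
  by (simp add: bil_of_map_def)

lemma bil_of_map_bound: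
  assumes T: "lipschitz_dual_map p0 L T" and L: "0 \<le> L" and v: "v \<in> free_space p0"
  shows "\<bar>bil_of_map p0 T v x\<bar> \<le> L * free_norm p0 v * norm x"
proof -
  have "\<bar>bil_of_map p0 T v x\<bar> \<le> free_norm p0 v * lipnorm (\<lambda>p. T p x)"
    using free_space_apply_bound[OF v lipschitz_dual_map_component(1)[OF T L]]
    by (simp add: bil_of_map_def v)
  also have "\<dots> \<le> free_norm p0 v * (L * norm x)"
    using lipschitz_dual_map_component(2)[OF T L] seminormed_subspace.nonneg[OF seminormed_free_space v]
    by (rule mult_left_mono)
  finally show ?thesis by (simp add: mult_ac)
qed

lemma bil_of_map_in_bil:
  assumes T: "lipschitz_dual_map p0 L T" and L: "0 \<le> L"
  shows "bil_of_map p0 T \<in> free_bil p0"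
proof -
  interpret F: seminormed_subspace "free_space p0" "free_norm p0"
    by (rule seminormed_free_space)
  have comp: "(\<lambda>p. T p x) \<in> lip0 p0" for x
    by (rule lipschitz_dual_map_component(1)[OF T L])
  have "linear (bil_of_map p0 T v)" if v: "v \<in> free_space p0" for v
  proof -
    have lin_v: "lin_on (lip0 p0) v"
      using free_space_in_dual[OF v] unfolding dual_space_def by blast
    have add: "(\<lambda>p. T p (x + y)) = (\<lambda>p. T p x) + (\<lambda>p. T p y)"
      and scale: "(\<lambda>p. T p (c *\<^sub>R x)) = c *\<^sub>R (\<lambda>p. T p x)" for x y c
      using T unfolding lipschitz_dual_map_def by (auto simp: fun_eq_iff linear_add linear_scale)
    show ?thesis
      using v lin_on_add[OF lin_v comp comp]
        lin_on_scale[OF lin_v seminormed_subspace.zero_in[OF seminormed_lip0] comp]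
      by (intro linearI) (simp_all add: bil_of_map_def add scale)
  qed
  moreover have "lin_on (free_space p0) (\<lambda>v. bil_of_map p0 T v x)" for x
    unfolding lin_on_def bil_of_map_def by (auto simp: F.lin_comb_in)
  moreover have "\<forall>v\<in>free_space p0. \<forall>x. \<bar>bil_of_map p0 T v x\<bar> \<le> L * free_norm p0 v * norm x"
    using bil_of_map_bound[OF T L] by blast
  ultimately show ?thesis
    unfolding bil_def by (auto simp: bil_of_map_def fun_eq_iff)
qed

lemma bilnorm_bil_of_map_le:
  assumes T: "lipschitz_dual_map p0 L T" and L: "0 \<le> L"
  shows "free_bilnorm p0 (bil_of_map p0 T) \<le> L"
proof (rule seminormed_subspace.bilnorm_least[OF seminormed_free_space])
  fix v and x :: 'b assume v: "v \<in> free_space p0" "free_norm p0 v \<le> 1" "norm x \<le> 1"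
  have "\<bar>bil_of_map p0 T v x\<bar> \<le> L * (free_norm p0 v * norm x)"
    using bil_of_map_bound[OF T L v(1)] by (simp add: mult_ac)
  also have "\<dots> \<le> L"
    using v L seminormed_subspace.nonneg[OF seminormed_free_space v(1)]
    by (simp add: mult_left_le mult_le_one)
  finally show "\<bar>bil_of_map p0 T v x\<bar> \<le> L" .
qed

lemma lipschitz_dual_map_of_bil:
  assumes B: "B \<in> free_bil p0"
  shows "lipschitz_dual_map p0 (free_bilnorm p0 B) (\<lambda>p. B (delta p0 p))"
proof -
  interpret F: seminormed_subspace "free_space p0" "free_norm p0"
    by (rule seminormed_free_space)
  have "\<bar>B (delta p0 p) x - B (delta p0 q) x\<bar> \<le> free_bilnorm p0 B * dist p q * norm x" for p q x
  proof -
    have "B (delta p0 p) x - B (delta p0 q) x = B (delta p0 p - delta p0 q) x"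
      using bil_delta_diff[OF B] by simp
    also have "\<bar>\<dots>\<bar> \<le> free_bilnorm p0 B * free_norm p0 (delta p0 p - delta p0 q) * norm x"
      by (rule F.bilnorm_bound[OF B delta_diff_in_free_space])
    also have "\<dots> \<le> free_bilnorm p0 B * dist p q * norm x"
      using free_norm_delta_diff_le F.bilnorm_nonneg[OF B]
      by (intro mult_right_mono mult_left_mono) auto
    finally show ?thesis .
  qed
  moreover have "B (delta p0 p0) x = 0" for x
    unfolding delta_base by (rule lin_on_zero[OF bil_lin_on[OF B] F.zero_in])
  ultimately show ?thesis
    unfolding lipschitz_dual_map_def using bil_linear[OF B delta_in_free_space] by blast
qed

section \<open>The dipole modification\<close>

definition log_cutoff :: "real \<Rightarrow> real \<Rightarrow> real \<Rightarrow> real" where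
  "log_cutoff r m t = (if t \<le> r then 0 else min 1 (ln (t / r) / ln m))"

lemma log_cutoff_eq_0: "t \<le> r \<Longrightarrow> log_cutoff r m t = 0"
  unfolding log_cutoff_def by simp

lemma log_cutoff_eq_1:
  assumes "0 < r" "1 < m" "r * m \<le> t"
  shows "log_cutoff r m t = 1"
proof -
  have "r * 1 < r * m" using assms by (intro mult_strict_left_mono) auto
  then have "r < t" using assms by linarith
  moreover have "m \<le> t / r" using assms by (simp add: field_simps)
  then have "1 \<le> ln (t / r) / ln m" using assms by simp
  ultimately show ?thesis unfolding log_cutoff_def by simp
qed

lemma log_cutoff_bounds:
  assumes "0 < r" "1 < m"
  shows "0 \<le> log_cutoff r m t" "log_cutoff r m t \<le> 1"
  unfolding log_cutoff_def using assms by auto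

lemma log_cutoff_mono:
  assumes r: "0 < r" and m: "1 < m" and ba: "b \<le> a"
  shows "log_cutoff r m b \<le> log_cutoff r m a"
proof (cases "b \<le> r")
  case True
  then show ?thesis using log_cutoff_bounds[OF r m] by (simp add: log_cutoff_eq_0)
next
  case False
  then have "ln (b / r) / ln m \<le> ln (a / r) / ln m"
    using r m ba by (intro divide_right_mono) (auto simp: divide_right_mono)
  then show ?thesis
    using False ba unfolding log_cutoff_def by (auto simp: min_def)
qed

lemma mult_ln_div_le:
  fixes s t :: real
  assumes "0 < s" "s \<le> t"
  shows "s * ln (t / s) \<le> t - s"
proof -
  have "s * ln (t / s) \<le> s * (t / s - 1)"
    using assms by (intro mult_left_mono ln_le_minus_one) auto
  also have "\<dots> = t - s"
    using assms by (simp add: right_diff_distrib)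
  finally show ?thesis .
qed

text \<open>The logarithmic profile is what makes \<open>t \<cdot> \<mu>'(t) \<le> 1 / ln m\<close>, in difference form.\<close>

lemma log_cutoff_increment:
  assumes r: "0 < r" and m: "1 < m" and ba: "0 \<le> b" "b \<le> a"
  shows "(log_cutoff r m a - log_cutoff r m b) * b \<le> (a - b) / ln m"
proof -
  let ?\<mu> = "log_cutoff r m"
  have lm: "0 < ln m" using m by simp
  consider "a \<le> r" | "b \<le> r" "r < a" | "r < b"
    using ba by linarith
  then show ?thesis
  proof cases
    case 1
    then show ?thesis using ba lm by (simp add: log_cutoff_eq_0)
  next
    case 2
    have "b * ln (a / r) \<le> r * ln (a / r)"
      using 2 r by (intro mult_right_mono) auto
    also have "\<dots> \<le> a - b"
      using mult_ln_div_le[of r a] 2 r by simp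
    finally have "(ln (a / r) / ln m) * b \<le> (a - b) / ln m"
      using lm by (simp add: field_simps)
    moreover have "?\<mu> a * b \<le> (ln (a / r) / ln m) * b"
      using 2 ba unfolding log_cutoff_def by (intro mult_right_mono) auto
    ultimately show ?thesis
      using 2 by (simp add: log_cutoff_eq_0)
  next
    case 3
    have b_pos: "0 < b" using 3 r by simp
    have "ln (b / r) / ln m \<le> ln (a / r) / ln m"
      using 3 r ba lm by (intro divide_right_mono) (auto simp: divide_right_mono)
    then have "?\<mu> a - ?\<mu> b \<le> ln (a / r) / ln m - ln (b / r) / ln m"
      using 3 ba unfolding log_cutoff_def by (auto simp: min_def)
    also have "\<dots> = ln (a / b) / ln m"
      using b_pos r ba by (simp add: ln_div diff_divide_distrib)
    finally have "(?\<mu> a - ?\<mu> b) * b \<le> (ln (a / b) / ln m) * b"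
      using b_pos by (intro mult_right_mono) auto
    also have "\<dots> \<le> (a - b) / ln m"
      using mult_ln_div_le[OF b_pos ba(2)] lm by (simp add: field_simps)
    finally show ?thesis .
  qed
qed

lemma lipschitz_cutoff_interpolation:
  fixes g :: "'m::metric_space \<Rightarrow> real" and v :: 'm
  assumes r: "0 < r" and m: "1 < m" and K: "0 \<le> K"
    and g: "\<And>p q. \<bar>g p - g q\<bar> \<le> K * dist p q"
  defines "G \<equiv> \<lambda>p. g v + log_cutoff r m (dist p v) * (g p - g v)"
  shows "\<bar>G p - G q\<bar> \<le> K * (1 + 1 / ln m) * dist p q"
proof -
  let ?\<mu> = "log_cutoff r m"
  have lm: "0 < ln m" using m by simp
  have one_sided: "\<bar>G p - G q\<bar> \<le> K * (1 + 1 / ln m) * dist p q"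
    if ord: "dist q v \<le> dist p v" for p q
  proof -
    let ?a = "dist p v" and ?b = "dist q v"
    have incr: "0 \<le> ?\<mu> ?a - ?\<mu> ?b" "(?\<mu> ?a - ?\<mu> ?b) * ?b \<le> (?a - ?b) / ln m"
      using log_cutoff_mono[OF r m ord] log_cutoff_increment[OF r m zero_le_dist ord] by auto
    have "?a - ?b \<le> dist p q"
      using dist_triangle[of p v q] by (simp add: dist_commute)
    then have "(?a - ?b) / ln m \<le> dist p q / ln m"
      using lm by (simp add: divide_right_mono)
    with incr(2) have incr': "(?\<mu> ?a - ?\<mu> ?b) * ?b \<le> dist p q / ln m"
      by linarith
    have "G p - G q = ?\<mu> ?a * (g p - g q) + (?\<mu> ?a - ?\<mu> ?b) * (g q - g v)"
      unfolding G_def by (simp add: algebra_simps)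
    also have "\<bar>\<dots>\<bar> \<le> \<bar>?\<mu> ?a * (g p - g q)\<bar> + \<bar>(?\<mu> ?a - ?\<mu> ?b) * (g q - g v)\<bar>"
      by (rule abs_triangle_ineq)
    also have "\<dots> = ?\<mu> ?a * \<bar>g p - g q\<bar> + (?\<mu> ?a - ?\<mu> ?b) * \<bar>g q - g v\<bar>"
      using log_cutoff_bounds[OF r m, of ?a] incr(1) by (simp add: abs_mult)
    also have "\<dots> \<le> 1 * (K * dist p q) + (?\<mu> ?a - ?\<mu> ?b) * (K * ?b)"
      using log_cutoff_bounds[OF r m, of ?a] incr(1) g[of p q] g[of q v] K
      by (intro add_mono mult_mono mult_left_mono) auto
    also have "\<dots> \<le> K * dist p q + K * (dist p q / ln m)"
      using mult_left_mono[OF incr' K] by (simp add: mult.left_commute)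
    finally show ?thesis by (simp add: algebra_simps)
  qed
  show ?thesis
    using one_sided[of q p] one_sided[of p q] by (cases "dist q v \<le> dist p v") (auto simp: dist_commute abs_minus_commute)
qed

definition dipole_constant :: "real \<Rightarrow> real" where
  "dipole_constant m = 1 + 1 / ln m + 2 / m"

text \<open>With \<open>\<rho> = d(u, v)\<close>: the map \<open>T\<close> is left unchanged at distance \<open>\<ge> m\<^sup>2\<rho>\<close> from \<open>v\<close>, frozen to
  \<open>T v\<close> within distance \<open>m\<rho>\<close> of \<open>v\<close>, and there perturbed by the tent \<open>min 0 (d(p, u) - \<rho>)\<close>
  supported in the ball of radius \<open>\<rho>\<close> around \<open>u\<close>, which creates the jump
  \<open>T'(u) - T'(v) = -\<rho> x'\<close>.\<close>

definition dipole_modification ::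
  "('m::metric_space \<Rightarrow> 'x \<Rightarrow> real) \<Rightarrow> ('x \<Rightarrow> real) \<Rightarrow> 'm \<Rightarrow> 'm \<Rightarrow> real \<Rightarrow> 'm \<Rightarrow> 'x \<Rightarrow> real"
  where "dipole_modification T x' u v m = (\<lambda>p x. T v x
    + log_cutoff (m * dist u v) m (dist p v) * (T p x - T v x) + min 0 (dist p u - dist u v) * x' x)"

lemma dipole_constant_ge_1: "4 \<le> m \<Longrightarrow> 1 \<le> dipole_constant m"
  unfolding dipole_constant_def by simp

lemma dipole_modification_linear:
  assumes "\<And>p. linear (T p)" "linear x'"
  shows "linear (dipole_modification T x' u v m p)"
  using assms unfolding dipole_modification_def
  by (intro linearI) (simp_all add: linear_add linear_scale algebra_simps)

lemma dipole_modification_near_v: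
  "dist p v \<le> m * dist u v \<Longrightarrow>
    dipole_modification T x' u v m p x = T v x + min 0 (dist p u - dist u v) * x' x"
  unfolding dipole_modification_def by (simp add: log_cutoff_eq_0)

lemma dipole_modification_off_ball:
  "dist u v \<le> dist p u \<Longrightarrow> dipole_modification T x' u v m p x
    = T v x + log_cutoff (m * dist u v) m (dist p v) * (T p x - T v x)"
  unfolding dipole_modification_def by simp

lemma tent_diff_le: "\<bar>min 0 (dist p u - \<rho>) - min 0 (dist q u - \<rho>)\<bar> \<le> dist p q"
proof -
  have "\<bar>min 0 (dist p u - \<rho>) - min 0 (dist q u - \<rho>)\<bar> \<le> \<bar>dist p u - dist q u\<bar>"
    by (simp add: min_def)
  also have "\<dots> \<le> dist p q"
    using abs_dist_diff_le[of p u q] by (simp add: dist_commute)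
  finally show ?thesis .
qed

lemma dist_near_v_if_near_u:
  assumes "dist p u < dist u v" "4 \<le> m"
  shows "dist p v \<le> m * dist u v"
proof -
  have "dist p v < 2 * dist u v"
    using dist_triangle[of p v u] assms(1) by (simp add: dist_commute)
  moreover have "2 * dist u v \<le> m * dist u v"
    using assms(2) by (intro mult_right_mono) auto
  ultimately show ?thesis by simp
qed

lemma dipole_modification_lipschitz_both_near_v:
  fixes T :: "'m::metric_space \<Rightarrow> 'x::real_normed_vector \<Rightarrow> real"
  assumes x': "\<And>x. \<bar>x' x\<bar> \<le> norm x" and m: "4 \<le> m"
    and p: "dist p v \<le> m * dist u v" and q: "dist q v \<le> m * dist u v"
  shows "\<bar>dipole_modification T x' u v m p x - dipole_modification T x' u v m q x\<bar>
    \<le> dipole_constant m * dist p q * norm x"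
proof -
  have "\<bar>dipole_modification T x' u v m p x - dipole_modification T x' u v m q x\<bar>
      = \<bar>min 0 (dist p u - dist u v) - min 0 (dist q u - dist u v)\<bar> * \<bar>x' x\<bar>"
    unfolding dipole_modification_near_v[OF p] dipole_modification_near_v[OF q]
    by (simp add: abs_mult[symmetric] algebra_simps)
  also have "\<dots> \<le> dist p q * norm x"
    by (intro mult_mono tent_diff_le x') auto
  also have "\<dots> \<le> dipole_constant m * dist p q * norm x"
    using mult_right_mono[OF dipole_constant_ge_1[OF m], of "dist p q * norm x"]
    by (simp add: mult.assoc)
  finally show ?thesis .
qed

lemma dipole_modification_lipschitz_across:
  fixes T :: "'m::metric_space \<Rightarrow> 'x::real_normed_vector \<Rightarrow> real"
  assumes T: "\<And>p q x. \<bar>T p x - T q x\<bar> \<le> dist p q * norm x"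
    and x': "\<And>x. \<bar>x' x\<bar> \<le> norm x" and uv: "u \<noteq> v" and m: "4 \<le> m"
    and p: "dist p u < dist u v" and q: "m * dist u v < dist q v"
  shows "\<bar>dipole_modification T x' u v m p x - dipole_modification T x' u v m q x\<bar>
    \<le> dipole_constant m * dist p q * norm x"
proof -
  let ?\<rho> = "dist u v" and ?h = "min 0 (dist p u - dist u v)"
  let ?G = "\<lambda>p. T v x + log_cutoff (m * ?\<rho>) m (dist p v) * (T p x - T v x)"
  have \<rho>: "0 < ?\<rho>" using uv by simp
  have two_\<rho>: "2 * ?\<rho> \<le> m * ?\<rho>" using m \<rho> by (intro mult_right_mono) auto
  have p_v: "dist p v < 2 * ?\<rho>"
    using dist_triangle[of p v u] p by (simp add: dist_commute)
  have "?\<rho> \<le> dist q u"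
    using dist_triangle[of q v u] q two_\<rho> by linarith
  moreover have "?G p = T v x"
    using p_v two_\<rho> by (simp add: log_cutoff_eq_0)
  ultimately have "dipole_modification T x' u v m p x - dipole_modification T x' u v m q x
      = (?G p - ?G q) + ?h * x' x"
    using p_v two_\<rho> by (simp add: dipole_modification_near_v dipole_modification_off_ball)
  also have "\<bar>\<dots>\<bar> \<le> \<bar>?G p - ?G q\<bar> + \<bar>?h\<bar> * \<bar>x' x\<bar>"
    by (metis abs_mult abs_triangle_ineq)
  also have "\<dots> \<le> norm x * (1 + 1 / ln m) * dist p q + (2 / m * dist p q) * norm x"
  proof (rule add_mono)
    show "\<bar>?G p - ?G q\<bar> \<le> norm x * (1 + 1 / ln m) * dist p q"
      using m \<rho> T by (intro lipschitz_cutoff_interpolation) (auto simp: mult.commute)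
    have "m * ?\<rho> - 2 * ?\<rho> \<le> dist p q"
      using dist_triangle[of q v p] q p_v by (simp add: dist_commute)
    moreover have "m * ?\<rho> / 2 \<le> m * ?\<rho> - 2 * ?\<rho>"
      using m \<rho> by (simp add: field_simps)
    ultimately have "?\<rho> \<le> 2 / m * dist p q"
      using m by (simp add: field_simps)
    moreover have "\<bar>?h\<bar> \<le> ?\<rho>"
      using \<rho> by (simp add: min_def)
    ultimately have "\<bar>?h\<bar> \<le> 2 / m * dist p q"
      by linarith
    then show "\<bar>?h\<bar> * \<bar>x' x\<bar> \<le> (2 / m * dist p q) * norm x"
      using x'[of x] by (intro mult_mono) auto
  qed
  also have "\<dots> = dipole_constant m * dist p q * norm x"
    by (simp add: dipole_constant_def algebra_simps)
  finally show ?thesis .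
qed

lemma dipole_modification_lipschitz_near_u:
  fixes T :: "'m::metric_space \<Rightarrow> 'x::real_normed_vector \<Rightarrow> real"
  assumes T: "\<And>p q x. \<bar>T p x - T q x\<bar> \<le> dist p q * norm x"
    and x': "\<And>x. \<bar>x' x\<bar> \<le> norm x" and uv: "u \<noteq> v" and m: "4 \<le> m"
    and p: "dist p u < dist u v"
  shows "\<bar>dipole_modification T x' u v m p x - dipole_modification T x' u v m q x\<bar>
    \<le> dipole_constant m * dist p q * norm x"
proof (cases "dist q v \<le> m * dist u v")
  case True
  then show ?thesis
    using dipole_modification_lipschitz_both_near_v[OF x' m dist_near_v_if_near_u[OF p m]] by blast
next
  case False
  then show ?thesis
    using dipole_modification_lipschitz_across[OF T x' uv m p] by simp
qed

lemma dipole_modification_lipschitz: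
  fixes T :: "'m::metric_space \<Rightarrow> 'x::real_normed_vector \<Rightarrow> real"
  assumes T: "\<And>p q x. \<bar>T p x - T q x\<bar> \<le> dist p q * norm x"
    and x': "\<And>x. \<bar>x' x\<bar> \<le> norm x" and uv: "u \<noteq> v" and m: "4 \<le> m"
  shows "\<bar>dipole_modification T x' u v m p x - dipole_modification T x' u v m q x\<bar>
    \<le> dipole_constant m * dist p q * norm x"
proof -
  consider "dist p u < dist u v" | "dist q u < dist u v" | "dist u v \<le> dist p u" "dist u v \<le> dist q u"
    by linarith
  then show ?thesis
  proof cases
    case 1
    then show ?thesis by (rule dipole_modification_lipschitz_near_u[OF T x' uv m])
  next
    case 2
    then show ?thesis
      using dipole_modification_lipschitz_near_u[OF T x' uv m, of q x p]
      by (simp add: abs_minus_commute dist_commute)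
  next
    case 3
    have "\<bar>dipole_modification T x' u v m p x - dipole_modification T x' u v m q x\<bar>
        = \<bar>(T v x + log_cutoff (m * dist u v) m (dist p v) * (T p x - T v x))
           - (T v x + log_cutoff (m * dist u v) m (dist q v) * (T q x - T v x))\<bar>"
      unfolding dipole_modification_off_ball[OF 3(1)] dipole_modification_off_ball[OF 3(2)] ..
    also have "\<dots> \<le> norm x * (1 + 1 / ln m) * dist p q"
      using uv m T by (intro lipschitz_cutoff_interpolation) (auto simp: mult.commute)
    also have "\<dots> \<le> dipole_constant m * dist p q * norm x"
      using m by (simp add: dipole_constant_def algebra_simps mult_right_mono)
    finally show ?thesis .
  qed
qed

lemma dipole_modification_eq_far:
  assumes uv: "u \<noteq> v" and m: "4 \<le> m" and t: "t = v \<or> m * m * dist u v \<le> dist t v"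
  shows "dipole_modification T x' u v m t x = T t x"
  using t
proof
  assume "t = v"
  then show ?thesis
    unfolding dipole_modification_def using uv m by (simp add: log_cutoff_eq_0 dist_commute)
next
  define \<rho> where "\<rho> = dist u v"
  have \<rho>: "0 < \<rho>" using uv unfolding \<rho>_def by simp
  assume far: "m * m * dist u v \<le> dist t v"
  then have "log_cutoff (m * \<rho>) m (dist t v) = 1"
    using m \<rho> unfolding \<rho>_def by (intro log_cutoff_eq_1) (auto simp: mult_ac)
  moreover have "2 * \<rho> \<le> m * m * \<rho>"
    using m \<rho> mult_mono[of 4 m 4 m] by (intro mult_right_mono) auto
  then have "\<rho> \<le> dist t u"
    using far dist_triangle[of t v u] unfolding \<rho>_def by linarith
  ultimately show ?thesis
    unfolding dipole_modification_def \<rho>_def by simp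
qed

lemma dipole_modification_jump:
  assumes "u \<noteq> v" "4 \<le> m"
  shows "dipole_modification T x' u v m u x - dipole_modification T x' u v m v x = - dist u v * x' x"
proof -
  have "log_cutoff (m * dist u v) m (dist u v) = 0" "log_cutoff (m * dist u v) m (dist v v) = 0"
    using assms by (auto intro!: log_cutoff_eq_0)
  then show ?thesis
    unfolding dipole_modification_def by (simp add: dist_commute)
qed

lemma lipschitz_dual_map_dipole_modification:
  assumes T: "lipschitz_dual_map p0 1 T" and x': "linear x'" "\<And>x. \<bar>x' x\<bar> \<le> norm x"
    and uv: "u \<noteq> v" and m: "4 \<le> m" and p0: "p0 = v \<or> m * m * dist u v \<le> dist p0 v"
  shows "lipschitz_dual_map p0 (dipole_constant m) (dipole_modification T x' u v m)"
  unfolding lipschitz_dual_map_def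
proof (intro conjI allI)
  show "linear (dipole_modification T x' u v m p)" for p
    using T x'(1) unfolding lipschitz_dual_map_def by (intro dipole_modification_linear) auto
  show "dipole_modification T x' u v m p0 x = 0" for x
    using dipole_modification_eq_far[OF uv m p0, of T x' x] T unfolding lipschitz_dual_map_def by simp
  show "\<bar>dipole_modification T x' u v m p x - dipole_modification T x' u v m q x\<bar>
      \<le> dipole_constant m * dist p q * norm x" for p q x
    using T x'(2) uv m unfolding lipschitz_dual_map_def
    by (intro dipole_modification_lipschitz) auto
qed

lemma dipole_bilinear_form:
  fixes B :: "(('m::metric_space \<Rightarrow> real) \<Rightarrow> real) \<Rightarrow> 'x::real_normed_vector \<Rightarrow> real"
  assumes B: "B \<in> free_bil p0" "free_bilnorm p0 B \<le> 1"
    and x': "linear x'" "\<And>x. \<bar>x' x\<bar> \<le> norm x" and uv: "u \<noteq> v" and m: "4 \<le> m"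
    and S: "p0 \<in> S" "\<forall>t\<in>S. t \<noteq> v \<longrightarrow> m * m * dist u v \<le> dist t v"
  obtains B' where "B' \<in> free_bil p0" "free_bilnorm p0 B' \<le> dipole_constant m"
    and "\<And>p x. p \<in> S \<Longrightarrow> B' (delta p0 p) x = B (delta p0 p) x"
    and "\<And>x. B' (delta p0 u) x - B' (delta p0 v) x = - dist u v * x' x"
proof
  let ?T = "\<lambda>p. B (delta p0 p)"
  let ?B' = "bil_of_map p0 (dipole_modification ?T x' u v m)"
  have "lipschitz_dual_map p0 (free_bilnorm p0 B) ?T"
    using B(1) by (rule lipschitz_dual_map_of_bil)
  then have "lipschitz_dual_map p0 1 ?T"
    using B(2) by (rule lipschitz_dual_map_mono)
  then have D: "lipschitz_dual_map p0 (dipole_constant m) (dipole_modification ?T x' u v m)"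
    using S x' uv m by (intro lipschitz_dual_map_dipole_modification) auto
  have C: "0 \<le> dipole_constant m"
    using dipole_constant_ge_1[OF m] by simp
  show "?B' \<in> free_bil p0" "free_bilnorm p0 ?B' \<le> dipole_constant m"
    using bil_of_map_in_bil[OF D C] bilnorm_bil_of_map_le[OF D C] by auto
  show "?B' (delta p0 p) x = B (delta p0 p) x" if "p \<in> S" for p x
  proof -
    have "p = v \<or> m * m * dist u v \<le> dist p v"
      using S(2) that by blast
    then show ?thesis
      using D C by (simp add: dipole_modification_eq_far[OF uv m])
  qed
  show "?B' (delta p0 u) x - ?B' (delta p0 v) x = - dist u v * x' x" for x
    using D C uv m by (simp add: dipole_modification_jump)
qed

section \<open>Finitely determined tensors\<close>

definition depends_only_on :: "('v \<Rightarrow> 'x \<Rightarrow> real) set \<Rightarrow> 'v set \<Rightarrow> (('v \<Rightarrow> 'x \<Rightarrow> real) \<Rightarrow> real) \<Rightarrow> bool"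
  where "depends_only_on W F \<Phi> \<longleftrightarrow> (\<forall>B\<in>W. \<forall>B'\<in>W. (\<forall>g\<in>F. \<forall>x. B g x = B' g x) \<longrightarrow> \<Phi> B = \<Phi> B')"

definition finitely_determined ::
  "'v::real_vector set \<Rightarrow> ('v \<Rightarrow> real) \<Rightarrow> 'v set \<Rightarrow> (('v \<Rightarrow> 'x::real_normed_vector \<Rightarrow> real) \<Rightarrow> real) \<Rightarrow> bool"
  where "finitely_determined V NV G z \<longleftrightarrow> (\<forall>e>0. \<exists>F \<Phi>. finite F \<and> F \<subseteq> G \<and>
    depends_only_on (bil V NV) F \<Phi> \<and> (\<forall>B\<in>bil V NV. \<bar>z B - \<Phi> B\<bar> \<le> e * bilnorm V NV B))"

lemma finitely_determinedE:
  assumes "finitely_determined V NV G z" "0 < e"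
  obtains F \<Phi> where "finite F" "F \<subseteq> G" "depends_only_on (bil V NV) F \<Phi>"
    "\<forall>B\<in>bil V NV. \<bar>z B - \<Phi> B\<bar> \<le> e * bilnorm V NV B"
proof -
  from assms(1)[unfolded finitely_determined_def, rule_format, OF assms(2)]
  obtain F \<Phi> where "finite F" "F \<subseteq> G" "depends_only_on (bil V NV) F \<Phi>"
    "\<forall>B\<in>bil V NV. \<bar>z B - \<Phi> B\<bar> \<le> e * bilnorm V NV B"
    by (elim exE conjE)
  then show thesis using that by blast
qed

lemma finitely_determinedI:
  assumes "\<And>e. 0 < e \<Longrightarrow> \<exists>F \<Phi>. finite F \<and> F \<subseteq> G \<and> depends_only_on (bil V NV) F \<Phi> \<and>
    (\<forall>B\<in>bil V NV. \<bar>z B - \<Phi> B\<bar> \<le> e * bilnorm V NV B)"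
  shows "finitely_determined V NV G z"
  unfolding finitely_determined_def using assms by blast

lemma depends_only_on_mono: "depends_only_on W F \<Phi> \<Longrightarrow> F \<subseteq> F' \<Longrightarrow> depends_only_on W F' \<Phi>"
  unfolding depends_only_on_def by blast

lemma depends_only_on_lin_comb:
  assumes "depends_only_on W F \<Phi>" "depends_only_on W F' \<Psi>"
  shows "depends_only_on W (F \<union> F') (\<lambda>B. c * \<Phi> B + \<Psi> B)"
  unfolding depends_only_on_def
proof (intro ballI impI)
  fix B B' assume B: "B \<in> W" "B' \<in> W" and agree: "\<forall>g\<in>F \<union> F'. \<forall>x. B g x = B' g x"
  then have "\<forall>g\<in>F. \<forall>x. B g x = B' g x" "\<forall>g\<in>F'. \<forall>x. B g x = B' g x"
    by simp_all
  then have "\<Phi> B = \<Phi> B'" "\<Psi> B = \<Psi> B'"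
    using assms B unfolding depends_only_on_def by blast+
  then show "c * \<Phi> B + \<Psi> B = c * \<Phi> B' + \<Psi> B'" by simp
qed

context seminormed_subspace
begin

lemma finitely_determined_zero: "finitely_determined S N G 0"
  unfolding finitely_determined_def
proof (intro allI impI)
  fix e :: real assume "0 < e"
  then show "\<exists>F \<Phi>. finite F \<and> F \<subseteq> G \<and> depends_only_on (bil S N) F \<Phi> \<and>
      (\<forall>B\<in>bil S N. \<bar>0 B - \<Phi> B\<bar> \<le> e * bilnorm S N B)"
    by (intro exI[of _ "{}"] exI[of _ "\<lambda>B. 0"]) (simp add: depends_only_on_def bilnorm_nonneg)
qed

lemma finitely_determined_lin_comb:
  assumes z: "finitely_determined S N G z" and z': "finitely_determined S N G z'"
  shows "finitely_determined S N G (c *\<^sub>R z + z')"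
proof (rule finitely_determinedI)
  fix e :: real assume e: "0 < e"
  define e' where "e' = e / (2 * (\<bar>c\<bar> + 1))"
  have e': "0 < e'" "\<bar>c\<bar> * e' \<le> e / 2"
    using e unfolding e'_def by (auto simp: field_simps)
  obtain F \<Phi> where F: "finite F" "F \<subseteq> G" "depends_only_on (bil S N) F \<Phi>"
    and \<Phi>: "\<forall>B\<in>bil S N. \<bar>z B - \<Phi> B\<bar> \<le> e' * bilnorm S N B"
    using z e'(1) by (rule finitely_determinedE)
  have "0 < e / 2" using e by simp
  with z' obtain F' \<Psi> where F': "finite F'" "F' \<subseteq> G" "depends_only_on (bil S N) F' \<Psi>"
    and \<Psi>: "\<forall>B\<in>bil S N. \<bar>z' B - \<Psi> B\<bar> \<le> e / 2 * bilnorm S N B"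
    by (rule finitely_determinedE)
  have "\<bar>(c *\<^sub>R z + z') B - (c * \<Phi> B + \<Psi> B)\<bar> \<le> e * bilnorm S N B" if B: "B \<in> bil S N" for B
  proof -
    have "(c *\<^sub>R z + z') B - (c * \<Phi> B + \<Psi> B) = c * (z B - \<Phi> B) + (z' B - \<Psi> B)"
      by (simp add: algebra_simps)
    also have "\<bar>\<dots>\<bar> \<le> \<bar>c * (z B - \<Phi> B)\<bar> + \<bar>z' B - \<Psi> B\<bar>"
      by (rule abs_triangle_ineq)
    also have "\<dots> = \<bar>c\<bar> * \<bar>z B - \<Phi> B\<bar> + \<bar>z' B - \<Psi> B\<bar>"
      by (simp add: abs_mult)
    also have "\<dots> \<le> \<bar>c\<bar> * (e' * bilnorm S N B) + e / 2 * bilnorm S N B"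
      using \<Phi> \<Psi> B by (intro add_mono mult_left_mono) auto
    also have "\<dots> \<le> e * bilnorm S N B"
      using mult_right_mono[OF e'(2) bilnorm_nonneg[OF B]] by (simp add: algebra_simps)
    finally show ?thesis .
  qed
  moreover have "finite (F \<union> F')" "F \<union> F' \<subseteq> G"
    using F F' by auto
  ultimately show "\<exists>F \<Phi>. finite F \<and> F \<subseteq> G \<and> depends_only_on (bil S N) F \<Phi> \<and>
      (\<forall>B\<in>bil S N. \<bar>(c *\<^sub>R z + z') B - \<Phi> B\<bar> \<le> e * bilnorm S N B)"
    using depends_only_on_lin_comb[OF F(3) F'(3)] by blast
qed

lemma finitely_determined_limit:
  assumes approx: "\<And>e. 0 < e \<Longrightarrow> \<exists>\<psi>. finitely_determined S N G \<psi> \<and>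
      z - \<psi> \<in> dual_space (bil S N) (bilnorm S N) \<and> dual_norm (bil S N) (bilnorm S N) (z - \<psi>) < e"
  shows "finitely_determined S N G z"
proof (rule finitely_determinedI)
  fix e :: real assume e: "0 < e"
  then obtain \<psi> where \<psi>: "finitely_determined S N G \<psi>"
    and close: "z - \<psi> \<in> dual_space (bil S N) (bilnorm S N)"
      "dual_norm (bil S N) (bilnorm S N) (z - \<psi>) < e / 2"
    using approx[of "e / 2"] by auto
  have "0 < e / 2" using e by simp
  with \<psi> obtain F \<Phi> where F: "finite F" "F \<subseteq> G" "depends_only_on (bil S N) F \<Phi>"
    and \<Phi>: "\<forall>B\<in>bil S N. \<bar>\<psi> B - \<Phi> B\<bar> \<le> e / 2 * bilnorm S N B"
    by (rule finitely_determinedE)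
  have "\<bar>z B - \<Phi> B\<bar> \<le> e * bilnorm S N B" if B: "B \<in> bil S N" for B
  proof -
    have "\<bar>(z - \<psi>) B\<bar> \<le> dual_norm (bil S N) (bilnorm S N) (z - \<psi>) * bilnorm S N B"
      by (rule seminormed_subspace.dual_norm_bound[OF seminormed_bil close(1) B])
    also have "\<dots> \<le> e / 2 * bilnorm S N B"
      using close(2) bilnorm_nonneg[OF B] by (intro mult_right_mono) auto
    finally have "\<bar>z B - \<psi> B\<bar> \<le> e / 2 * bilnorm S N B" by simp
    moreover have "\<bar>\<psi> B - \<Phi> B\<bar> \<le> e / 2 * bilnorm S N B" using \<Phi> B by blast
    ultimately show ?thesis by linarith
  qed
  then show "\<exists>F \<Phi>. finite F \<and> F \<subseteq> G \<and> depends_only_on (bil S N) F \<Phi> \<and>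
      (\<forall>B\<in>bil S N. \<bar>z B - \<Phi> B\<bar> \<le> e * bilnorm S N B)"
    using F by blast
qed

lemma finitely_determined_closed_span:
  assumes E: "E \<subseteq> dual_space (bil S N) (bilnorm S N)"
    and det: "\<And>\<psi>. \<psi> \<in> E \<Longrightarrow> finitely_determined S N G \<psi>"
    and z: "z \<in> closed_span_dual (bil S N) (bilnorm S N) E"
  shows "finitely_determined S N G z"
proof (rule finitely_determined_limit)
  have span_det: "finitely_determined S N G \<psi>" if "\<psi> \<in> span E" for \<psi>
    using that
  proof (induction rule: span_induct_alt)
    case base
    then show ?case by (rule finitely_determined_zero)
  next
    case (step c g y)
    then show ?case using det by (blast intro: finitely_determined_lin_comb)
  qed
  fix e :: real assume "0 < e"
  then obtain \<psi> where \<psi>: "\<psi> \<in> span E" "dual_norm (bil S N) (bilnorm S N) (z - \<psi>) < e"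
    using z unfolding closed_span_dual_def by blast
  moreover have "z - \<psi> \<in> dual_space (bil S N) (bilnorm S N)"
    using z \<psi>(1) span_minimal[OF E subspace_dual_space] subspace_dual_space
    unfolding closed_span_dual_def by (blast intro: subspace_diff)
  ultimately show "\<exists>\<psi>. finitely_determined S N G \<psi> \<and> z - \<psi> \<in> dual_space (bil S N) (bilnorm S N) \<and>
      dual_norm (bil S N) (bilnorm S N) (z - \<psi>) < e"
    using span_det by blast
qed
end

context seminormed_subspace
begin

lemma span_value_depends_only_on:
  fixes x :: "'x::real_normed_vector"
  assumes G: "G \<subseteq> dual_space S N" and \<psi>: "\<psi> \<in> span G"
  shows "\<exists>F. finite F \<and> F \<subseteq> G \<and>
    depends_only_on (bil (closed_span_dual S N G) (dual_norm S N)) F (\<lambda>B. B \<psi> x)"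
proof -
  let ?W = "bil (closed_span_dual S N G) (dual_norm S N) :: (('a \<Rightarrow> real) \<Rightarrow> 'x \<Rightarrow> real) set"
  have "\<psi> \<in> span G \<and> (\<exists>F. finite F \<and> F \<subseteq> G \<and> depends_only_on ?W F (\<lambda>B. B \<psi> x))"
    using \<psi>
  proof (induction rule: span_induct_alt)
    case base
    have "B 0 x = 0" if "B \<in> ?W" for B
      using lin_on_zero[OF bil_lin_on[OF that]]
        seminormed_subspace.zero_in[OF seminormed_closed_span_dual[OF G]] by blast
    then have "depends_only_on ?W {} (\<lambda>B. B 0 x)"
      unfolding depends_only_on_def by metis
    then show ?case by (intro conjI span_zero exI[of _ "{}"] finite.emptyI empty_subsetI)
  next
    case (step c g y)
    then obtain F where F: "finite F" "F \<subseteq> G" "depends_only_on ?W F (\<lambda>B. B y x)"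
      by blast
    have in_V: "g \<in> closed_span_dual S N G" "y \<in> closed_span_dual S N G"
      using step span_subset_closed_span_dual[OF G] span_base[of g G] by auto
    have "depends_only_on ?W (insert g F) (\<lambda>B. B (c *\<^sub>R g + y) x)"
      unfolding depends_only_on_def
    proof (intro ballI impI)
      fix B B' assume B: "B \<in> ?W" "B' \<in> ?W" and agree: "\<forall>h\<in>insert g F. \<forall>x. B h x = B' h x"
      have "B y x = B' y x"
        using F(3) B agree unfolding depends_only_on_def by blast
      moreover have "B g x = B' g x" using agree by blast
      ultimately show "B (c *\<^sub>R g + y) x = B' (c *\<^sub>R g + y) x"
        using bil_lin_on[OF B(1), of x] bil_lin_on[OF B(2), of x] in_V unfolding lin_on_def by simp
    qed
    moreover have "c *\<^sub>R g + y \<in> span G"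
      using step by (intro span_add span_scale) (auto intro: span_base)
    ultimately show ?case
      using F step(1) by (intro conjI exI[of _ "insert g F"] finite.insertI insert_subsetI)
  qed
  then show ?thesis by blast
qed

lemma elementary_tensor_finitely_determined:
  assumes G: "G \<subseteq> dual_space S N" and v: "v \<in> closed_span_dual S N G"
  shows "finitely_determined (closed_span_dual S N G) (dual_norm S N) G
    (elementary_tensor (closed_span_dual S N G) (dual_norm S N) v x)"
proof (rule finitely_determinedI)
  interpret V: seminormed_subspace "closed_span_dual S N G" "dual_norm S N"
    by (rule seminormed_closed_span_dual[OF G])
  fix e :: real assume e: "0 < e"
  have nx: "0 < norm x + 1" by (simp add: add_nonneg_pos)
  then have "0 < e / (norm x + 1)" using e by simp
  then obtain \<psi> where \<psi>: "\<psi> \<in> span G" "dual_norm S N (v - \<psi>) < e / (norm x + 1)"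
    using v unfolding closed_span_dual_def by blast
  obtain F where F: "finite F" "F \<subseteq> G"
    "depends_only_on (bil (closed_span_dual S N G) (dual_norm S N)) F (\<lambda>B. B \<psi> x)"
    using span_value_depends_only_on[OF G \<psi>(1)] by blast
  have \<psi>_V: "\<psi> \<in> closed_span_dual S N G"
    using \<psi>(1) span_subset_closed_span_dual[OF G] by blast
  have "\<bar>elementary_tensor (closed_span_dual S N G) (dual_norm S N) v x B - B \<psi> x\<bar>
      \<le> e * bilnorm (closed_span_dual S N G) (dual_norm S N) B"
    if B: "B \<in> bil (closed_span_dual S N G) (dual_norm S N)" for B
  proof -
    let ?b = "bilnorm (closed_span_dual S N G) (dual_norm S N) B"
    have "B v x - B \<psi> x = B (v - \<psi>) x"
      using lin_on_diff[OF bil_lin_on[OF B] v \<psi>_V] by simp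
    also have "\<bar>\<dots>\<bar> \<le> ?b * dual_norm S N (v - \<psi>) * norm x"
      using V.bilnorm_bound[OF B] V.lin_comb_in[OF \<psi>_V v, of "-1"] by simp
    also have "\<dots> \<le> ?b * (e / (norm x + 1)) * norm x"
      using \<psi>(2) V.bilnorm_nonneg[OF B] by (intro mult_right_mono mult_left_mono) auto
    also have "\<dots> = ?b * (e / (norm x + 1) * norm x)"
      by simp
    also have "\<dots> \<le> ?b * e"
      using e nx V.bilnorm_nonneg[OF B] by (intro mult_left_mono) (simp_all add: field_simps)
    finally show ?thesis using B by (simp add: mult.commute)
  qed
  then show "\<exists>F \<Phi>. finite F \<and> F \<subseteq> G \<and>
      depends_only_on (bil (closed_span_dual S N G) (dual_norm S N)) F \<Phi> \<and>
      (\<forall>B\<in>bil (closed_span_dual S N G) (dual_norm S N).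
        \<bar>elementary_tensor (closed_span_dual S N G) (dual_norm S N) v x B - \<Phi> B\<bar>
          \<le> e * bilnorm (closed_span_dual S N G) (dual_norm S N) B)"
    using F by blast
qed

lemma ptensor_finitely_determined:
  assumes G: "G \<subseteq> dual_space S N"
    and z: "z \<in> ptensor (closed_span_dual S N G) (dual_norm S N)"
  shows "finitely_determined (closed_span_dual S N G) (dual_norm S N) G z"
proof -
  interpret V: seminormed_subspace "closed_span_dual S N G" "dual_norm S N"
    by (rule seminormed_closed_span_dual[OF G])
  let ?E = "{elementary_tensor (closed_span_dual S N G) (dual_norm S N) v x | v x.
    v \<in> closed_span_dual S N G}"
  have "finitely_determined (closed_span_dual S N G) (dual_norm S N) G \<psi>" if "\<psi> \<in> ?E" for \<psi>
    using that elementary_tensor_finitely_determined[OF G] by blast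
  moreover have "z \<in> closed_span_dual (bil (closed_span_dual S N G) (dual_norm S N))
      (bilnorm (closed_span_dual S N G) (dual_norm S N)) ?E"
    using z unfolding ptensor_eq_closed_span_dual .
  ultimately show ?thesis
    by (rule V.finitely_determined_closed_span[OF V.elementary_tensors_in_dual])
qed

end

section \<open>Norming functionals\<close>

text \<open>Graphs of norm-dominated linear functionals on subspaces, normalised at \<open>x0\<close>; by Zorn's
  lemma there is a maximal one, and maximality forces it to be total (Hahn--Banach).\<close>

definition dominated_graph :: "'x::real_normed_vector \<Rightarrow> ('x \<times> real) set \<Rightarrow> bool" where
  "dominated_graph x0 G \<longleftrightarrow> (0, 0) \<in> G \<and> (\<forall>p\<in>G. \<forall>q\<in>G. p + q \<in> G) \<and> (\<forall>c. \<forall>p\<in>G. c *\<^sub>R p \<in> G)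
     \<and> (\<forall>x a b. (x, a) \<in> G \<longrightarrow> (x, b) \<in> G \<longrightarrow> a = b) \<and> (\<forall>x a. (x, a) \<in> G \<longrightarrow> a \<le> norm x)
     \<and> (x0, norm x0) \<in> G"

lemma dominated_graphD:
  assumes "dominated_graph x0 G"
  shows "(0, 0) \<in> G" "(x, a) \<in> G \<Longrightarrow> (y, b) \<in> G \<Longrightarrow> (x + y, a + b) \<in> G"
    "(x, a) \<in> G \<Longrightarrow> (c *\<^sub>R x, c * a) \<in> G" "(x, a) \<in> G \<Longrightarrow> (x, b) \<in> G \<Longrightarrow> a = b"
    "(x, a) \<in> G \<Longrightarrow> a \<le> norm x" "(x0, norm x0) \<in> G"
  using assms unfolding dominated_graph_def by (auto, metis add_Pair, metis scaleR_Pair real_scaleR_def)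

lemma dominated_graph_step_value:
  fixes x1 :: "'x::real_normed_vector"
  assumes G: "dominated_graph x0 G"
  obtains c where "\<And>y a. (y, a) \<in> G \<Longrightarrow> a - norm (y - x1) \<le> c"
    and "\<And>y a. (y, a) \<in> G \<Longrightarrow> c \<le> norm (y + x1) - a"
proof
  define c where "c = Sup {a - norm (y - x1) | y a. (y, a) \<in> G}"
  have key: "a - norm (y - x1) \<le> norm (y' + x1) - a'" if "(y, a) \<in> G" "(y', a') \<in> G" for y a y' a'
  proof -
    have "a + a' \<le> norm (y + y')"
      using dominated_graphD(2,5)[OF G] that by blast
    also have "\<dots> \<le> norm (y - x1) + norm (y' + x1)"
      using norm_triangle_ineq[of "y - x1" "y' + x1"] by simp
    finally show ?thesis by simp
  qed
  show "a - norm (y - x1) \<le> c" if "(y, a) \<in> G" for y a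
    unfolding c_def using that key[OF _ dominated_graphD(1)[OF G]]
    by (intro cSup_upper bdd_aboveI[where M = "norm (0 + x1) - 0"]) auto
  show "c \<le> norm (y' + x1) - a'" if "(y', a') \<in> G" for y' a'
    unfolding c_def using that key dominated_graphD(1)[OF G] by (intro cSup_least) auto
qed

lemma dominated_graph_extension_le:
  fixes x1 :: "'x::real_normed_vector"
  assumes G: "dominated_graph x0 G" and ya: "(y, a) \<in> G"
    and c_lower: "\<And>y a. (y, a) \<in> G \<Longrightarrow> a - norm (y - x1) \<le> c"
    and c_upper: "\<And>y a. (y, a) \<in> G \<Longrightarrow> c \<le> norm (y + x1) - a"
  shows "a + t * c \<le> norm (y + t *\<^sub>R x1)"
proof (cases t "0::real" rule: linorder_cases)
  case greater
  have "c \<le> norm ((1 / t) *\<^sub>R y + x1) - (1 / t) * a"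
    using c_upper[OF dominated_graphD(3)[OF G ya, of "1 / t"]] by simp
  then have "t * c \<le> t * (norm ((1 / t) *\<^sub>R y + x1) - (1 / t) * a)"
    using greater by (simp add: mult_left_mono)
  also have "\<dots> = norm (t *\<^sub>R ((1 / t) *\<^sub>R y + x1)) - a"
    using greater by (simp add: right_diff_distrib)
  also have "t *\<^sub>R ((1 / t) *\<^sub>R y + x1) = y + t *\<^sub>R x1"
    using greater by (simp add: scaleR_add_right)
  finally show ?thesis by simp
next
  case less
  have "(1 / -t) * a - norm ((1 / -t) *\<^sub>R y - x1) \<le> c"
    using c_lower[OF dominated_graphD(3)[OF G ya, of "1 / -t"]] by simp
  then have "(-t) * ((1 / -t) * a - norm ((1 / -t) *\<^sub>R y - x1)) \<le> (-t) * c"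
    using less by (simp add: mult_left_mono)
  also have "(-t) * ((1 / -t) * a - norm ((1 / -t) *\<^sub>R y - x1))
      = a - norm ((-t) *\<^sub>R ((1 / -t) *\<^sub>R y - x1))"
    using less by (simp add: right_diff_distrib)
  also have "(-t) *\<^sub>R ((1 / -t) *\<^sub>R y - x1) = y + t *\<^sub>R x1"
    using less by (simp add: scaleR_diff_right)
  finally show ?thesis by simp
qed (use dominated_graphD(5)[OF G ya] in simp)

lemma dominated_graph_extension_unique:
  fixes x1 :: "'x::real_normed_vector"
  assumes G: "dominated_graph x0 G" and x1: "\<forall>a. (x1, a) \<notin> G"
    and ya: "(y, a) \<in> G" and ya': "(y', a') \<in> G" and eq: "y + t *\<^sub>R x1 = y' + t' *\<^sub>R x1"
  shows "a + t * c = a' + t' * c"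
proof -
  have "t = t'"
  proof (rule ccontr)
    assume ne: "t \<noteq> t'"
    have "(t - t') *\<^sub>R x1 = y' - y"
      using eq by (simp add: algebra_simps)
    then have "(1 / (t - t')) *\<^sub>R ((t - t') *\<^sub>R x1) = (1 / (t - t')) *\<^sub>R (y' - y)"
      by simp
    then have "x1 = (1 / (t - t')) *\<^sub>R (y' - y)"
      using ne by simp
    moreover have "(y' - y, a' - a) \<in> G"
      using dominated_graphD(2)[OF G ya' dominated_graphD(3)[OF G ya, of "-1"]] by simp
    ultimately have "(x1, (1 / (t - t')) * (a' - a)) \<in> G"
      using dominated_graphD(3)[OF G, of "y' - y" "a' - a" "1 / (t - t')"] by simp
    then show False using x1 by blast
  qed
  then show ?thesis
    using eq ya ya' dominated_graphD(4)[OF G] by auto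
qed

lemma dominated_graph_extend:
  fixes x1 :: "'x::real_normed_vector"
  assumes G: "dominated_graph x0 G" and x1: "\<forall>a. (x1, a) \<notin> G"
  shows "\<exists>G'. dominated_graph x0 G' \<and> G \<subseteq> G' \<and> G' \<noteq> G"
proof -
  note G_props = dominated_graphD[OF G]
  obtain c where c_lower: "\<And>y a. (y, a) \<in> G \<Longrightarrow> a - norm (y - x1) \<le> c"
    and c_upper: "\<And>y a. (y, a) \<in> G \<Longrightarrow> c \<le> norm (y + x1) - a"
    using dominated_graph_step_value[OF G] by blast
  define G' where "G' = {(y + t *\<^sub>R x1, a + t * c) | y a t. (y, a) \<in> G}"
  have G'I: "(y + t *\<^sub>R x1, a + t * c) \<in> G'" if "(y, a) \<in> G" for y a t
    using that unfolding G'_def by blast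
  have "dominated_graph x0 G'"
    unfolding dominated_graph_def
  proof (intro conjI ballI allI impI)
    show "(0, 0) \<in> G'" using G'I[OF G_props(1), of 0] by simp
    show "(x0, norm x0) \<in> G'" using G'I[OF G_props(6), of 0] by simp
  next
    fix p q assume "p \<in> G'" "q \<in> G'"
    then obtain y a t y' a' t' where "p = (y + t *\<^sub>R x1, a + t * c)" "(y, a) \<in> G"
      and "q = (y' + t' *\<^sub>R x1, a' + t' * c)" "(y', a') \<in> G"
      unfolding G'_def by blast
    then show "p + q \<in> G'"
      using G'I[OF G_props(2), of y a y' a' "t + t'"] by (simp add: algebra_simps)
  next
    fix k p assume "p \<in> G'"
    then obtain y a t where "p = (y + t *\<^sub>R x1, a + t * c)" "(y, a) \<in> G"
      unfolding G'_def by blast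
    then show "k *\<^sub>R p \<in> G'"
      using G'I[OF G_props(3), of y a k "k * t"] by (simp add: algebra_simps)
  next
    fix x b1 b2 assume "(x, b1) \<in> G'" "(x, b2) \<in> G'"
    then show "b1 = b2"
      unfolding G'_def using dominated_graph_extension_unique[OF G x1] by blast
  next
    fix x a assume "(x, a) \<in> G'"
    then show "a \<le> norm x"
      unfolding G'_def using dominated_graph_extension_le[OF G _ c_lower c_upper] by blast
  qed
  moreover have "G \<subseteq> G'" using G'I[of _ _ 0] by auto
  moreover have "(x1, c) \<in> G'" using G'I[OF G_props(1), of 1] by simp
  ultimately show ?thesis using x1 by blast
qed

lemma dominated_graph_Union:
  assumes C: "C \<in> chains {G. dominated_graph x0 G}" and ne: "C \<noteq> {}"
  shows "dominated_graph x0 (\<Union>C)"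
proof -
  have sub: "\<And>G. G \<in> C \<Longrightarrow> dominated_graph x0 G"
    using C unfolding chains_def by blast
  have two: "\<exists>G\<in>C. p \<in> G \<and> q \<in> G" if "p \<in> \<Union>C" "q \<in> \<Union>C" for p q
    using that C unfolding chains_def chain_subset_def by blast
  obtain G1 where G1: "G1 \<in> C" using ne by blast
  show ?thesis unfolding dominated_graph_def
  proof (intro conjI ballI allI impI)
    show "(0, 0) \<in> \<Union>C" "(x0, norm x0) \<in> \<Union>C"
      using G1 dominated_graphD(1,6)[OF sub] by blast+
  next
    fix p q assume "p \<in> \<Union>C" "q \<in> \<Union>C"
    then obtain G where "G \<in> C" "p \<in> G" "q \<in> G" using two by blast
    then show "p + q \<in> \<Union>C" using sub unfolding dominated_graph_def by blast
  next
    fix c p assume "p \<in> \<Union>C"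
    then obtain G where "G \<in> C" "p \<in> G" by blast
    then show "c *\<^sub>R p \<in> \<Union>C" using sub unfolding dominated_graph_def by blast
  next
    fix x a b assume "(x, a) \<in> \<Union>C" "(x, b) \<in> \<Union>C"
    then obtain G where "G \<in> C" "(x, a) \<in> G" "(x, b) \<in> G" using two by blast
    then show "a = b" using dominated_graphD(4)[OF sub] by blast
  next
    fix x a assume "(x, a) \<in> \<Union>C"
    then obtain G where "G \<in> C" "(x, a) \<in> G" by blast
    then show "a \<le> norm x" using dominated_graphD(5)[OF sub] by blast
  qed
qed

lemma dominated_graph_line:
  fixes x0 :: "'x::real_normed_vector"
  assumes x0: "x0 \<noteq> 0"
  shows "dominated_graph x0 (range (\<lambda>t. (t *\<^sub>R x0, t * norm x0)))"
  unfolding dominated_graph_def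
proof (intro conjI ballI allI impI)
  show "(0, 0) \<in> range (\<lambda>t. (t *\<^sub>R x0, t * norm x0))"
    by (auto intro: range_eqI[of _ _ 0])
  show "(x0, norm x0) \<in> range (\<lambda>t. (t *\<^sub>R x0, t * norm x0))"
    by (auto intro: range_eqI[of _ _ 1])
next
  fix p q assume "p \<in> range (\<lambda>t. (t *\<^sub>R x0, t * norm x0))" "q \<in> range (\<lambda>t. (t *\<^sub>R x0, t * norm x0))"
  then obtain s t where "p = (s *\<^sub>R x0, s * norm x0)" "q = (t *\<^sub>R x0, t * norm x0)" by blast
  then have "p + q = ((s + t) *\<^sub>R x0, (s + t) * norm x0)" by (simp add: algebra_simps)
  then show "p + q \<in> range (\<lambda>t. (t *\<^sub>R x0, t * norm x0))" by blast
next
  fix c p assume "p \<in> range (\<lambda>t. (t *\<^sub>R x0, t * norm x0))"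
  then obtain s where "p = (s *\<^sub>R x0, s * norm x0)" by blast
  then have "c *\<^sub>R p = ((c * s) *\<^sub>R x0, (c * s) * norm x0)" by (simp add: algebra_simps)
  then show "c *\<^sub>R p \<in> range (\<lambda>t. (t *\<^sub>R x0, t * norm x0))" by blast
next
  fix x a b assume "(x, a) \<in> range (\<lambda>t. (t *\<^sub>R x0, t * norm x0))"
    "(x, b) \<in> range (\<lambda>t. (t *\<^sub>R x0, t * norm x0))"
  then obtain s t where "x = s *\<^sub>R x0" "a = s * norm x0" "x = t *\<^sub>R x0" "b = t * norm x0"
    by blast
  then show "a = b" using x0 by (metis scaleR_cancel_right)
next
  fix x a assume "(x, a) \<in> range (\<lambda>t. (t *\<^sub>R x0, t * norm x0))"
  then show "a \<le> norm x" by (auto intro!: mult_right_mono)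
qed

lemma exists_total_dominated_graph:
  fixes x0 :: "'x::real_normed_vector"
  assumes x0: "x0 \<noteq> 0"
  obtains M where "dominated_graph x0 M" "\<And>x. \<exists>a. (x, a) \<in> M"
proof -
  have "\<exists>U\<in>{G. dominated_graph x0 G}. \<forall>X\<in>C. X \<subseteq> U"
    if "C \<in> chains {G. dominated_graph x0 G}" for C
    using dominated_graph_Union[OF that] dominated_graph_line[OF x0] by (cases "C = {}") auto
  from Zorn_Lemma2[OF ballI[OF this]] obtain M where M: "dominated_graph x0 M"
    and maximal: "\<And>X. dominated_graph x0 X \<Longrightarrow> M \<subseteq> X \<Longrightarrow> X = M"
    by blast
  have "\<exists>a. (x, a) \<in> M" for x
    using dominated_graph_extend[OF M] maximal by blast
  with M show thesis using that by blast
qed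

lemma exists_norming_functional:
  fixes x0 :: "'x::real_normed_vector"
  assumes x0: "x0 \<noteq> 0"
  obtains f where "linear f" "\<And>x. \<bar>f x\<bar> \<le> norm x" "f x0 = norm x0"
proof -
  obtain M where M: "dominated_graph x0 M" and total: "\<And>x. \<exists>a. (x, a) \<in> M"
    using exists_total_dominated_graph[OF x0] by blast
  note M_props = dominated_graphD[OF M]
  define f where "f x = (THE a. (x, a) \<in> M)" for x
  have f_in: "(x, f x) \<in> M" for x
    unfolding f_def using total[of x] M_props(4) by (metis theI)
  have f_eq: "(x, a) \<in> M \<Longrightarrow> f x = a" for x a
    using f_in M_props(4) by blast
  show thesis
  proof
    show "linear f"
      using f_eq[OF M_props(2)[OF f_in f_in]] f_eq[OF M_props(3)[OF f_in]] by (intro linearI) auto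
    show "\<bar>f x\<bar> \<le> norm x" for x
      using M_props(5)[OF f_in[of x]] M_props(5)[OF M_props(3)[OF f_in[of x], of "-1"]] by simp
    show "f x0 = norm x0"
      by (rule f_eq[OF M_props(6)])
  qed
qed

section \<open>Octahedrality\<close>

lemma exists_far_pair:
  fixes S :: "'m::metric_space set"
  assumes not_ud: "\<not> uniformly_discrete (UNIV :: 'm set)" and S: "finite S" and K: "1 \<le> K"
  obtains u v where "u \<noteq> v" "\<forall>t\<in>S. t \<noteq> v \<longrightarrow> K * dist u v \<le> dist t v"
proof -
  define \<delta> where "\<delta> = Min (insert 1 {dist s t | s t. s \<in> S \<and> t \<in> S \<and> s \<noteq> t})"
  have fin: "finite {dist s t | s t. s \<in> S \<and> t \<in> S \<and> s \<noteq> t}"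
    by (rule finite_subset[of _ "(\<lambda>(s, t). dist s t) ` (S \<times> S)"]) (use S in auto)
  have \<delta>_pos: "0 < \<delta>"
    unfolding \<delta>_def using fin by (subst Min_gr_iff) auto
  have \<delta>_le: "\<delta> \<le> dist s t" if "s \<in> S" "t \<in> S" "s \<noteq> t" for s t
    unfolding \<delta>_def using fin that by (intro Min_le) auto
  have "\<exists>a b :: 'm. a \<noteq> b \<and> dist a b < d" if "0 < d" for d
    using not_ud that unfolding uniformly_discrete_def by (meson UNIV_I not_le)
  moreover have "0 < \<delta> / (K * K)"
    using \<delta>_pos K by simp
  ultimately obtain a b :: 'm where ab: "a \<noteq> b" "dist a b < \<delta> / (K * K)"
    by blast
  show thesis
  proof (cases "\<forall>t\<in>S. t \<noteq> b \<longrightarrow> K * dist a b \<le> dist t b")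
    case True
    then show thesis using that ab(1) by blast
  next
    case False
    text \<open>Some point \<open>s \<in> S\<close> is very close to \<open>b\<close>; then \<open>b\<close> and \<open>s\<close> are a pair far from the rest of \<open>S\<close>.\<close>
    then obtain s where s: "s \<in> S" "s \<noteq> b" "dist s b < K * dist a b" by auto
    have "K * dist b s \<le> dist t s" if t: "t \<in> S" "t \<noteq> s" for t
    proof -
      have "K * dist b s \<le> K * (K * dist a b)"
        using s K by (simp add: dist_commute)
      also have "\<dots> \<le> \<delta>"
        using ab(2) K by (simp add: field_simps)
      also have "\<dots> \<le> dist t s"
        using \<delta>_le[OF t(1) s(1) t(2)] .
      finally show ?thesis .
    qed
    then show thesis using that s(2) by (metis dist_commute)
  qed
qed

context seminormed_subspace
begin

lemma exists_norming_bil: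
  fixes z :: "(('a \<Rightarrow> 'x::real_normed_vector \<Rightarrow> real)) \<Rightarrow> real"
  assumes z: "z \<in> ptensor S N" and norm_z: "ptnorm S N z = 1" and e: "0 < e"
  obtains B where "B \<in> bil S N" "bilnorm S N B \<le> 1" "1 - e \<le> z B"
proof -
  let ?Y = "{\<bar>z B\<bar> | B. B \<in> bil S N \<and> bilnorm S N B \<le> 1}"
  have sup: "Sup ?Y = 1"
    using norm_z unfolding ptnorm_def dual_norm_def .
  have "(0 :: 'a \<Rightarrow> 'x \<Rightarrow> real) \<in> bil S N"
    by (rule subspace_0[OF subspace_bil])
  moreover have "bilnorm S N (0 :: 'a \<Rightarrow> 'x \<Rightarrow> real) \<le> 1"
    by (rule bilnorm_least) simp
  ultimately have "?Y \<noteq> {}"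
    by blast
  then obtain B where B: "B \<in> bil S N" "bilnorm S N B \<le> 1" "1 - e < \<bar>z B\<bar>"
    using less_cSupD[of ?Y "1 - e"] sup e by force
  have "lin_on (bil S N) z"
    using ptensor_in_dual[OF z] unfolding dual_space_def by blast
  then have "z ((-1) *\<^sub>R B) = (-1) * z B"
    by (rule lin_on_scale[OF _ subspace_0[OF subspace_bil] B(1)])
  then have "z ((-1) *\<^sub>R B) = - z B"
    by (simp only: mult_minus1)
  moreover have "(-1) *\<^sub>R B \<in> bil S N"
    by (rule subspace_mul[OF subspace_bil B(1)])
  moreover have "bilnorm S N ((-1) *\<^sub>R B) \<le> 1"
    using bilnorm_scale[OF B(1), of "-1"] B(2) by simp
  ultimately show thesis
    using that B by (cases "0 \<le> z B") fastforce+
qed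

end

lemma ptnorm_dipole_tensor_le:
  fixes p0 u v :: "'m::metric_space" and x0 :: "'x::real_normed_vector"
  shows "ptnorm (free_space p0) (free_norm p0)
    (elementary_tensor (free_space p0) (free_norm p0) (delta p0 u - delta p0 v) x0) \<le> dist u v * norm x0"
proof (rule seminormed_subspace.ptnorm_least[OF seminormed_free_space])
  interpret F: seminormed_subspace "free_space p0" "free_norm p0"
    by (rule seminormed_free_space)
  fix B :: "(('m \<Rightarrow> real) \<Rightarrow> real) \<Rightarrow> 'x \<Rightarrow> real"
  assume B: "B \<in> free_bil p0" "free_bilnorm p0 B \<le> 1"
  have "\<bar>B (delta p0 u - delta p0 v) x0\<bar>
      \<le> free_bilnorm p0 B * free_norm p0 (delta p0 u - delta p0 v) * norm x0"
    by (rule F.bilnorm_bound[OF B(1) delta_diff_in_free_space])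
  also have "\<dots> \<le> 1 * dist u v * norm x0"
    using B free_norm_delta_diff_le F.bilnorm_nonneg[OF B(1)] F.nonneg[OF delta_diff_in_free_space]
    by (intro mult_right_mono mult_mono) auto
  finally show "\<bar>elementary_tensor (free_space p0) (free_norm p0) (delta p0 u - delta p0 v) x0 B\<bar>
      \<le> dist u v * norm x0"
    using B(1) by simp
qed

lemma ptnorm_dipole_tensor_ge:
  fixes p0 u v :: "'m::metric_space" and x0 :: "'x::real_normed_vector"
  assumes x0: "x0 \<noteq> 0"
  shows "dist u v * norm x0 \<le> ptnorm (free_space p0) (free_norm p0)
    (elementary_tensor (free_space p0) (free_norm p0) (delta p0 u - delta p0 v) x0)"
proof -
  obtain x' where x': "linear x'" "\<And>x. \<bar>x' x\<bar> \<le> norm x" "x' x0 = norm x0"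
    using exists_norming_functional[OF x0] by blast
  define T where "T p x = (dist p v - dist p0 v) * x' x" for p x
  have "\<bar>T p x - T q x\<bar> \<le> 1 * dist p q * norm x" for p q x
  proof -
    have "\<bar>T p x - T q x\<bar> = \<bar>dist p v - dist q v\<bar> * \<bar>x' x\<bar>"
      unfolding T_def by (simp add: abs_mult[symmetric] left_diff_distrib)
    also have "\<dots> \<le> dist p q * norm x"
      using abs_dist_diff_le[of p v q] x'(2) by (intro mult_mono) (auto simp: dist_commute)
    finally show ?thesis by simp
  qed
  moreover have "linear (T p)" for p
    unfolding T_def using x'(1)
    by (intro linearI) (simp_all add: linear_add linear_scale algebra_simps)
  ultimately have T: "lipschitz_dual_map p0 1 T"
    unfolding lipschitz_dual_map_def by (simp add: T_def)
  have "elementary_tensor (free_space p0) (free_norm p0) (delta p0 u - delta p0 v) x0 (bil_of_map p0 T)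
      = dist u v * norm x0"
    using bil_delta_diff[OF bil_of_map_in_bil[OF T], of u v x0] bil_of_map_in_bil[OF T] T x'(3)
    by (simp add: T_def algebra_simps)
  moreover have "\<bar>elementary_tensor (free_space p0) (free_norm p0) (delta p0 u - delta p0 v) x0
      (bil_of_map p0 T)\<bar> \<le> ptnorm (free_space p0) (free_norm p0)
        (elementary_tensor (free_space p0) (free_norm p0) (delta p0 u - delta p0 v) x0)"
    using T by (intro seminormed_subspace.ptnorm_upper[OF seminormed_free_space]
        seminormed_subspace.elementary_tensor_in_ptensor[OF seminormed_free_space]
        delta_diff_in_free_space bil_of_map_in_bil bilnorm_bil_of_map_le) auto
  ultimately show ?thesis by simp
qed

lemma ptnorm_dipole_tensor:
  "x0 \<noteq> 0 \<Longrightarrow> ptnorm (free_space p0) (free_norm p0)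
    (elementary_tensor (free_space p0) (free_norm p0) (delta p0 u - delta p0 v) x0) = dist u v * norm x0"
  by (rule antisym[OF ptnorm_dipole_tensor_le ptnorm_dipole_tensor_ge])

definition unit_dipole ::
  "'m::metric_space \<Rightarrow> 'm \<Rightarrow> 'm \<Rightarrow> 'x::real_normed_vector \<Rightarrow> ((('m \<Rightarrow> real) \<Rightarrow> real) \<Rightarrow> 'x \<Rightarrow> real) \<Rightarrow> real"
  where "unit_dipole p0 u v x0 = (1 / (dist u v * norm x0)) *\<^sub>R
    elementary_tensor (free_space p0) (free_norm p0) (delta p0 u - delta p0 v) x0"

lemma unit_dipole_in_ptensor: "unit_dipole p0 u v x0 \<in> ptensor (free_space p0) (free_norm p0)"
proof -
  interpret F: seminormed_subspace "free_space p0" "free_norm p0"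
    by (rule seminormed_free_space)
  show ?thesis
    unfolding unit_dipole_def
    by (intro subspace_mul[OF seminormed_subspace.subspace[OF F.seminormed_ptensor]]
        F.elementary_tensor_in_ptensor delta_diff_in_free_space)
qed

lemma ptnorm_unit_dipole:
  assumes "u \<noteq> v" "x0 \<noteq> 0"
  shows "ptnorm (free_space p0) (free_norm p0) (unit_dipole p0 u v x0) = 1"
proof -
  interpret F: seminormed_subspace "free_space p0" "free_norm p0"
    by (rule seminormed_free_space)
  have "ptnorm (free_space p0) (free_norm p0) (unit_dipole p0 u v x0)
      = \<bar>1 / (dist u v * norm x0)\<bar> * ptnorm (free_space p0) (free_norm p0)
          (elementary_tensor (free_space p0) (free_norm p0) (delta p0 u - delta p0 v) x0)"
    unfolding unit_dipole_def
    by (intro seminormed_subspace.homogeneous[OF F.seminormed_ptensor F.elementary_tensor_in_ptensor]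
        delta_diff_in_free_space)
  then show ?thesis
    using assms by (simp add: ptnorm_dipole_tensor)
qed

lemma unit_dipole_apply:
  "B \<in> free_bil p0 \<Longrightarrow>
    unit_dipole p0 u v x0 B = (B (delta p0 u) x0 - B (delta p0 v) x0) / (dist u v * norm x0)"
  by (simp add: unit_dipole_def bil_delta_diff)

definition approx_normed_on ::
  "'m::metric_space \<Rightarrow> 'm set \<Rightarrow> real \<Rightarrow> (((('m \<Rightarrow> real) \<Rightarrow> real) \<Rightarrow> 'x::real_normed_vector \<Rightarrow> real) \<Rightarrow> real) \<Rightarrow> bool"
  where "approx_normed_on p0 S e z \<longleftrightarrow> (\<exists>B \<Phi>. B \<in> free_bil p0 \<and> free_bilnorm p0 B \<le> 1 \<and> 1 - e \<le> z B \<and>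
    depends_only_on (free_bil p0) (delta p0 ` S) \<Phi> \<and>
    (\<forall>B'\<in>free_bil p0. \<bar>z B' - \<Phi> B'\<bar> \<le> e * free_bilnorm p0 B'))"

lemma approx_normed_on_mono:
  assumes "approx_normed_on p0 S e z" "S \<subseteq> S'"
  shows "approx_normed_on p0 S' e z"
proof -
  have "delta p0 ` S \<subseteq> delta p0 ` S'"
    using assms(2) by (rule image_mono)
  then show ?thesis
    using assms(1) depends_only_on_mono unfolding approx_normed_on_def by blast
qed

lemma free_ptensor_finitely_determined:
  "z \<in> ptensor (free_space p0) (free_norm p0) \<Longrightarrow>
    finitely_determined (free_space p0) (free_norm p0) (range (delta p0)) z"
  unfolding free_space_eq free_norm_def
  by (rule seminormed_subspace.ptensor_finitely_determined[OF seminormed_lip0])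
    (auto intro: delta_in_dual)

lemma exists_approx_normed_on:
  assumes z: "z \<in> ptensor (free_space p0) (free_norm p0)"
    and norm_z: "ptnorm (free_space p0) (free_norm p0) z = 1" and e: "0 < e"
  shows "\<exists>S. finite S \<and> approx_normed_on p0 S e z"
proof -
  obtain B where B: "B \<in> free_bil p0" "free_bilnorm p0 B \<le> 1" "1 - e \<le> z B"
    using seminormed_subspace.exists_norming_bil[OF seminormed_free_space z norm_z e] by blast
  obtain F \<Phi> where F: "finite F" "F \<subseteq> range (delta p0)" "depends_only_on (free_bil p0) F \<Phi>"
    and \<Phi>: "\<forall>B'\<in>free_bil p0. \<bar>z B' - \<Phi> B'\<bar> \<le> e * free_bilnorm p0 B'"
    using free_ptensor_finitely_determined[OF z] e by (rule finitely_determinedE)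
  obtain S where "finite S" "F = delta p0 ` S"
    using finite_subset_image[OF F(1,2)] by blast
  then show ?thesis
    unfolding approx_normed_on_def using B F(3) \<Phi> by blast
qed

lemma exists_common_support:
  assumes A: "finite A"
    and unit: "\<And>z. z \<in> A \<Longrightarrow> z \<in> ptensor (free_space p0) (free_norm p0) \<and>
      ptnorm (free_space p0) (free_norm p0) z = 1"
    and e: "0 < e"
  obtains S where "finite S" "p0 \<in> S" "\<And>z. z \<in> A \<Longrightarrow> approx_normed_on p0 S e z"
proof -
  have "\<forall>z\<in>A. \<exists>S. finite S \<and> approx_normed_on p0 S e z"
    using exists_approx_normed_on unit e by blast
  from bchoice[OF this] obtain f where f: "\<forall>z\<in>A. finite (f z) \<and> approx_normed_on p0 (f z) e z"
    by blast
  show thesis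
  proof
    show "finite (insert p0 (\<Union>(f ` A)))" using A f by auto
    show "approx_normed_on p0 (insert p0 (\<Union>(f ` A))) e z" if "z \<in> A" for z
      using f that by (blast intro: approx_normed_on_mono)
  qed simp
qed

text \<open>\<open>\<Phi>\<close> cannot distinguish the modified form \<open>B'\<close> from \<open>B\<close>, so \<open>z\<close> still nearly peaks at \<open>B'\<close>.\<close>

lemma approx_normed_on_dipole_peak:
  assumes approx: "approx_normed_on p0 S e z" and e: "0 \<le> e"
    and x': "linear x'" "\<And>x. \<bar>x' x\<bar> \<le> norm x" and uv: "u \<noteq> v" and m: "4 \<le> m"
    and S: "p0 \<in> S" "\<forall>t\<in>S. t \<noteq> v \<longrightarrow> m * m * dist u v \<le> dist t v"
  obtains B' where "B' \<in> free_bil p0" "free_bilnorm p0 B' \<le> dipole_constant m"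
    and "1 - 2 * e - e * dipole_constant m \<le> z B'"
    and "\<And>x. B' (delta p0 u) x - B' (delta p0 v) x = - dist u v * x' x"
proof -
  let ?C = "dipole_constant m"
  obtain B \<Phi> where B: "B \<in> free_bil p0" "free_bilnorm p0 B \<le> 1" "1 - e \<le> z B"
    and \<Phi>: "depends_only_on (free_bil p0) (delta p0 ` S) \<Phi>"
      "\<forall>B'\<in>free_bil p0. \<bar>z B' - \<Phi> B'\<bar> \<le> e * free_bilnorm p0 B'"
    using approx unfolding approx_normed_on_def by blast
  obtain B' where B': "B' \<in> free_bil p0" "free_bilnorm p0 B' \<le> ?C"
    and agree: "\<And>p x. p \<in> S \<Longrightarrow> B' (delta p0 p) x = B (delta p0 p) x"
    and jump: "\<And>x. B' (delta p0 u) x - B' (delta p0 v) x = - dist u v * x' x"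
    using dipole_bilinear_form[OF B(1,2) x' uv m S] by blast
  have "\<forall>g\<in>delta p0 ` S. \<forall>x. B' g x = B g x"
    using agree by blast
  then have "\<Phi> B' = \<Phi> B"
    using \<Phi>(1) B'(1) B(1) unfolding depends_only_on_def by blast
  moreover have "\<bar>z B' - \<Phi> B'\<bar> \<le> e * ?C"
  proof -
    have "\<bar>z B' - \<Phi> B'\<bar> \<le> e * free_bilnorm p0 B'"
      using \<Phi>(2) B'(1) by blast
    also have "\<dots> \<le> e * ?C"
      by (rule mult_left_mono[OF B'(2) e])
    finally show ?thesis .
  qed
  moreover have "\<bar>z B - \<Phi> B\<bar> \<le> e"
  proof -
    have "\<bar>z B - \<Phi> B\<bar> \<le> e * free_bilnorm p0 B"
      using \<Phi>(2) B(1) by blast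
    also have "\<dots> \<le> e"
      using mult_left_mono[OF B(2) e] by simp
    finally show ?thesis .
  qed
  ultimately have "1 - 2 * e - e * ?C \<le> z B'"
    using B(3) by (simp add: abs_le_iff)
  then show thesis
    using that B' jump by blast
qed

lemma ptnorm_diff_unit_dipole_ge:
  fixes z :: "((('m::metric_space \<Rightarrow> real) \<Rightarrow> real) \<Rightarrow> 'x::real_normed_vector \<Rightarrow> real) \<Rightarrow> real"
  assumes z: "z \<in> ptensor (free_space p0) (free_norm p0)" and approx: "approx_normed_on p0 S e z"
    and e: "0 \<le> e" and S: "p0 \<in> S" "\<forall>t\<in>S. t \<noteq> v \<longrightarrow> m * m * dist u v \<le> dist t v"
    and uv: "u \<noteq> v" and m: "4 \<le> m" and x0: "x0 \<noteq> 0"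
  shows "2 - 2 * e - e * dipole_constant m
    \<le> dipole_constant m * ptnorm (free_space p0) (free_norm p0) (z - unit_dipole p0 u v x0)"
proof -
  interpret F: seminormed_subspace "free_space p0" "free_norm p0"
    by (rule seminormed_free_space)
  let ?C = "dipole_constant m" and ?y = "unit_dipole p0 u v x0"
  obtain x' where x': "linear x'" "\<And>x. \<bar>x' x\<bar> \<le> norm x" "x' x0 = norm x0"
    using exists_norming_functional[OF x0] by blast
  obtain B' where B': "B' \<in> free_bil p0" "free_bilnorm p0 B' \<le> ?C"
    and z_B': "1 - 2 * e - e * ?C \<le> z B'"
    and jump: "\<And>x. B' (delta p0 u) x - B' (delta p0 v) x = - dist u v * x' x"
    using approx_normed_on_dipole_peak[OF approx e x'(1,2) uv m S] by blast
  have "?y B' = (- dist u v * x' x0) / (dist u v * norm x0)"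
    using unit_dipole_apply[OF B'(1)] jump[of x0] by simp
  then have y_B': "?y B' = -1"
    using uv x0 x'(3) by simp
  have zy: "z - ?y \<in> ptensor (free_space p0) (free_norm p0)"
    by (rule subspace_diff[OF seminormed_subspace.subspace[OF F.seminormed_ptensor] z
          unit_dipole_in_ptensor])
  have "(z - ?y) B' \<le> \<bar>(z - ?y) B'\<bar>"
    by simp
  also have "\<dots> \<le> ptnorm (free_space p0) (free_norm p0) (z - ?y) * free_bilnorm p0 B'"
    by (rule F.ptnorm_bound[OF zy B'(1)])
  also have "\<dots> \<le> ptnorm (free_space p0) (free_norm p0) (z - ?y) * ?C"
    by (rule mult_left_mono[OF B'(2) seminormed_subspace.nonneg[OF F.seminormed_ptensor zy]])
  finally show ?thesis
    using z_B' y_B' by (simp add: mult.commute)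
qed

lemma exists_octahedral_parameters:
  assumes \<epsilon>: "0 < \<epsilon>"
  obtains m e where "4 \<le> m" "0 < e" "(2 - \<epsilon>) * dipole_constant m \<le> 2 - 2 * e - e * dipole_constant m"
proof
  define \<epsilon>1 where "\<epsilon>1 = min \<epsilon> 1"
  have \<epsilon>1: "0 < \<epsilon>1" "\<epsilon>1 \<le> 1" "\<epsilon>1 \<le> \<epsilon>" using \<epsilon> unfolding \<epsilon>1_def by auto
  define \<eta> where "\<eta> = \<epsilon>1 / 4"
  have \<eta>: "0 < \<eta>" "\<eta> \<le> 1" using \<epsilon>1 unfolding \<eta>_def by auto
  define m where "m = max 4 (max (exp (2 / \<eta>)) (4 / \<eta>))"
  show m4: "4 \<le> m" unfolding m_def by simp
  define e where "e = \<epsilon>1 / 16"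
  show "0 < e" using \<epsilon>1 unfolding e_def by simp
  have "ln (exp (2 / \<eta>)) \<le> ln m"
    using m4 unfolding m_def by (subst ln_le_cancel_iff) auto
  then have ln_m: "2 / \<eta> \<le> ln m" by simp
  moreover have "0 < 2 / \<eta>" using \<eta> by simp
  ultimately have "0 < ln m" by linarith
  then have "1 / ln m \<le> \<eta> / 2"
    using \<eta> ln_m by (simp add: field_simps)
  moreover have "4 / \<eta> \<le> m"
    unfolding m_def by simp
  then have "2 / m \<le> \<eta> / 2"
    using \<eta> m4 by (simp add: field_simps)
  ultimately have C: "1 \<le> dipole_constant m" "dipole_constant m \<le> 1 + \<eta>"
    using dipole_constant_ge_1[OF m4] unfolding dipole_constant_def by auto
  have "(2 - \<epsilon>) * dipole_constant m \<le> (2 - \<epsilon>1) * dipole_constant m"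
    using \<epsilon>1 C by (intro mult_right_mono) auto
  also have "\<dots> \<le> (2 - \<epsilon>1) * (1 + \<eta>)"
    using \<epsilon>1 C by (intro mult_left_mono) auto
  also have "\<dots> = 2 - \<epsilon>1 / 2 - \<epsilon>1 * \<epsilon>1 / 4"
    unfolding \<eta>_def by (simp add: field_simps)
  also have "\<dots> \<le> 2 - 2 * e - e * dipole_constant m"
  proof -
    have "e * dipole_constant m \<le> e * 2"
      using C(2) \<eta> \<epsilon>1 unfolding e_def by (intro mult_left_mono) auto
    moreover have "0 \<le> \<epsilon>1 * \<epsilon>1" by simp
    ultimately show ?thesis using \<epsilon>1 unfolding e_def by linarith
  qed
  finally show "(2 - \<epsilon>) * dipole_constant m \<le> 2 - 2 * e - e * dipole_constant m" .
qed

theorem theorem4p1: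
  fixes p0 :: "'m::metric_space"
  assumes "\<not> uniformly_discrete (UNIV :: 'm set)"
    and "\<exists>x::'x::banach. x \<noteq> 0"
  shows "octahedral
           (ptensor (free_space p0) (free_norm p0) :: ((((('m \<Rightarrow> real) \<Rightarrow> real) \<Rightarrow> 'x \<Rightarrow> real) \<Rightarrow> real) set))
           (ptnorm (free_space p0) (free_norm p0))"
  unfolding octahedral_def
proof (intro allI impI, elim conjE)
  fix A :: "(((('m \<Rightarrow> real) \<Rightarrow> real) \<Rightarrow> 'x \<Rightarrow> real) \<Rightarrow> real) set" and \<epsilon> :: real
  assume A: "finite A" "A \<subseteq> {z \<in> ptensor (free_space p0) (free_norm p0). ptnorm (free_space p0) (free_norm p0) z = 1}"
    and \<epsilon>: "0 < \<epsilon>"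
  obtain x0 :: 'x where x0: "x0 \<noteq> 0" using assms(2) by blast
  obtain m e where m: "4 \<le> m" and e: "0 < e"
    and param: "(2 - \<epsilon>) * dipole_constant m \<le> 2 - 2 * e - e * dipole_constant m"
    using exists_octahedral_parameters[OF \<epsilon>] by blast
  obtain S where S: "finite S" "p0 \<in> S" "\<And>z. z \<in> A \<Longrightarrow> approx_normed_on p0 S e z"
    using exists_common_support[OF A(1) _ e, of p0] A(2) by blast
  have "1 \<le> m * m" using m mult_mono[of 1 m 1 m] by simp
  then obtain u v where uv: "u \<noteq> v" "\<forall>t\<in>S. t \<noteq> v \<longrightarrow> m * m * dist u v \<le> dist t v"
    using exists_far_pair[OF assms(1) S(1)] by blast
  have "2 - \<epsilon> \<le> ptnorm (free_space p0) (free_norm p0) (z - unit_dipole p0 u v x0)" if "z \<in> A" for z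
  proof -
    have "(2 - \<epsilon>) * dipole_constant m
        \<le> dipole_constant m * ptnorm (free_space p0) (free_norm p0) (z - unit_dipole p0 u v x0)"
      using ptnorm_diff_unit_dipole_ge[OF _ S(3)[OF that] _ S(2) uv(2) uv(1) m x0] that A(2) param e
      by fastforce
    then show ?thesis
      using dipole_constant_ge_1[OF m] by (simp add: mult.commute)
  qed
  then show "\<exists>y\<in>ptensor (free_space p0) (free_norm p0). ptnorm (free_space p0) (free_norm p0) y = 1 \<and>
      (\<forall>z\<in>A. 2 - \<epsilon> \<le> ptnorm (free_space p0) (free_norm p0) (z - y))"
    using unit_dipole_in_ptensor ptnorm_unit_dipole[OF uv(1) x0] by blast
qed

end
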